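(* Let $m>\frac12$, $\beta\in(0,1)$. There exists a constant $C_H=C_H(m,\beta)<\infty$ such that for all $0<\varepsilon\le\frac12$, all $s_1,s_2\in[0,1]$ and all $f,g\in C^\infty(\mathbb R/\mathbb Z,\mathbb R)$, $$\|H^\varepsilon_{s_1,s_2,\beta}(f,g)\|_{H^m}\le C_H\|f\|_{H^{m+\beta}}\|g\|_{H^{m+\beta}}.$$
   Context: $H^\varepsilon_{s_1,s_2,\beta}(f,g)(x)=\int_{|w|\in[\varepsilon,\frac12]}\frac{f(x+s_1w)g(x+s_2w)}{w|w|^\beta}\,\mathrm dw$ for $x\in\mathbb R/\mathbb Z$. For $s\ge0$, $\|f\|_{H^s}^2=\sum_{k\in\mathbb Z}(1+k^2)^s|\hat f(k)|^2$ with $\hat f(k)=\int_0^1f(x)e^{-2\pi ikx}\,\mathrm dx$. *)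

theory Defs
  imports "HOL-Analysis.Analysis"
begin

text \<open>Functions on R/Z are represented as 1-periodic functions real => real.\<close>

definition periodic1 :: "(real \<Rightarrow> real) \<Rightarrow> bool" where
  "periodic1 f \<longleftrightarrow> (\<forall>x. f (x + 1) = f x)"

definition smooth_fun :: "(real \<Rightarrow> real) \<Rightarrow> bool" where
  "smooth_fun f \<longleftrightarrow> (\<forall>n x. ((deriv ^^ n) f) differentiable (at x))"

definition fourier_coeff :: "(real \<Rightarrow> real) \<Rightarrow> int \<Rightarrow> complex" where
  "fourier_coeff f k =
     integral {0..1} (\<lambda>x. complex_of_real (f x) * exp (- 2 * pi * \<i> * of_int k * of_real x))"

definition sobolev_norm :: "real \<Rightarrow> (real \<Rightarrow> real) \<Rightarrow> real" where
  "sobolev_norm s f =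
     sqrt (\<Sum>\<^sub>\<infinity>k\<in>(UNIV::int set). (1 + (real_of_int k)\<^sup>2) powr s * (cmod (fourier_coeff f k))\<^sup>2)"

definition Hop :: "real \<Rightarrow> real \<Rightarrow> real \<Rightarrow> real \<Rightarrow> (real \<Rightarrow> real) \<Rightarrow> (real \<Rightarrow> real) \<Rightarrow> real \<Rightarrow> real" where
  "Hop \<epsilon> s1 s2 \<beta> f g x =
     integral {w. \<epsilon> \<le> \<bar>w\<bar> \<and> \<bar>w\<bar> \<le> 1/2}
       (\<lambda>w. f (x + s1 * w) * g (x + s2 * w) / (w * \<bar>w\<bar> powr \<beta>))"

end

theory Submission
  imports Defs
begin

text \<open>Let \<open>a\<^sub>k\<close>, \<open>b\<^sub>k\<close> be the Fourier coefficients of \<open>f\<close>, \<open>g\<close>. Expanding both in Fourier series,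
  the \<open>n\<close>-th coefficient of \<open>H(f, g)\<close> is \<open>\<Sum>\<^sub>k a\<^sub>k b\<^sub>n\<^sub>-\<^sub>k \<mu>(k s\<^sub>1 + (n - k) s\<^sub>2)\<close> with the symbol
  \<open>\<mu>(\<xi>) = \<integral>\<^sub>\<epsilon>\<^sup>1\<^sup>/\<^sup>2 w\<^sup>-\<^sup>1\<^sup>-\<^sup>\<beta> (e(\<xi> w) - e(-\<xi> w)) dw\<close>, and \<open>\<bar>\<mu>(\<xi>)\<bar> \<le> C \<bar>\<xi>\<bar>\<^sup>\<beta>\<close>
  uniformly in \<open>\<epsilon>\<close> (split the integral at \<open>w \<approx> 1/\<bar>\<xi>\<bar>\<close>). Writing \<open>\<langle>k\<rangle> = (1 + k\<^sup>2)\<^sup>1\<^sup>/\<^sup>2\<close>,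
  the inequality \<open>\<langle>k + l\<rangle>\<^sup>m (\<bar>k\<bar> + \<bar>l\<bar>)\<^sup>\<beta> \<le> 2\<^sup>m\<^sup>+\<^sup>\<beta> (\<langle>k\<rangle>\<^sup>m\<^sup>+\<^sup>\<beta> + \<langle>l\<rangle>\<^sup>m\<^sup>+\<^sup>\<beta>)\<close>
  dominates \<open>\<langle>n\<rangle>\<^sup>m\<close> times the \<open>n\<close>-th coefficient by two convolutions of an \<open>\<ell>\<^sup>2\<close> sequence
  (\<open>\<langle>k\<rangle>\<^sup>m\<^sup>+\<^sup>\<beta> \<bar>a\<^sub>k\<bar>\<close> or \<open>\<langle>k\<rangle>\<^sup>m\<^sup>+\<^sup>\<beta> \<bar>b\<^sub>k\<bar>\<close>) with an \<open>\<ell>\<^sup>1\<close> sequence (\<open>\<bar>b\<^sub>k\<bar>\<close> or \<open>\<bar>a\<^sub>k\<bar>\<close>).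
  Young's inequality, together with the Cauchy--Schwarz bound of \<open>\<Sum>\<^sub>k \<bar>a\<^sub>k\<bar>\<close> by the
  \<open>H\<^sup>m\<^sup>+\<^sup>\<beta>\<close> norm of \<open>f\<close> (valid as \<open>m + \<beta> > 1/2\<close>), gives the estimate.
  Fourier inversion for smooth periodic functions, needed for the expansion, follows from
  uniqueness of Fourier coefficients, which rests on the Stone--Weierstrass theorem on the
  unit circle.\<close>

lemma has_sum_diff:
  fixes f g :: "'a \<Rightarrow> 'b::topological_ab_group_add"
  assumes "(f has_sum a) A" "(g has_sum b) A"
  shows "((\<lambda>x. f x - g x) has_sum (a - b)) A"
  using has_sum_add[OF assms(1) has_sum_uminus[THEN iffD2], of g "- b"] assms(2) by simp

lemma has_sum_sum:
  fixes F :: "'n \<Rightarrow> 'a \<Rightarrow> 'b::topological_comm_monoid_add"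
  assumes "finite N" "\<And>n. n \<in> N \<Longrightarrow> (F n has_sum S n) A"
  shows "((\<lambda>x. \<Sum>n\<in>N. F n x) has_sum (\<Sum>n\<in>N. S n)) A"
  using assms by (induction N rule: finite_induct) (auto intro: has_sum_add)

lemma has_sum_delta:
  fixes a :: "'b::topological_comm_monoid_add"
  shows "((\<lambda>k. if k = n then a else 0) has_sum a) UNIV"
proof -
  have "((\<lambda>k. if k = n then a else 0) has_sum a) {n}"
    using has_sum_finite[of "{n}" "\<lambda>k. if k = n then a else 0"] by simp
  then show ?thesis by (rule has_sum_cong_neutral[THEN iffD1, rotated -1]) auto
qed

lemma Cauchy_Schwarz_infsum:
  fixes x y :: "'i \<Rightarrow> real"
  assumes sx: "(\<lambda>i. (x i)\<^sup>2) summable_on I" and sy: "(\<lambda>i. (y i)\<^sup>2) summable_on I"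
  shows "(\<lambda>i. \<bar>x i\<bar> * \<bar>y i\<bar>) summable_on I"
    and "(\<Sum>\<^sub>\<infinity>i\<in>I. \<bar>x i\<bar> * \<bar>y i\<bar>) \<le> sqrt (\<Sum>\<^sub>\<infinity>i\<in>I. (x i)\<^sup>2) * sqrt (\<Sum>\<^sub>\<infinity>i\<in>I. (y i)\<^sup>2)"
proof -
  have fin: "(\<Sum>i\<in>F. \<bar>x i\<bar> * \<bar>y i\<bar>) \<le> sqrt (\<Sum>\<^sub>\<infinity>i\<in>I. (x i)\<^sup>2) * sqrt (\<Sum>\<^sub>\<infinity>i\<in>I. (y i)\<^sup>2)"
    if F: "finite F" "F \<subseteq> I" for F
  proof -
    have "(\<Sum>i\<in>F. \<bar>x i\<bar> * \<bar>y i\<bar>) \<le> L2_set x F * L2_set y F" by (rule L2_set_mult_ineq)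
    also have "\<dots> \<le> sqrt (\<Sum>\<^sub>\<infinity>i\<in>I. (x i)\<^sup>2) * sqrt (\<Sum>\<^sub>\<infinity>i\<in>I. (y i)\<^sup>2)"
      unfolding L2_set_def
      by (intro mult_mono real_sqrt_le_mono finite_sum_le_infsum sx sy F)
         (auto intro!: infsum_nonneg sum_nonneg)
    finally show ?thesis .
  qed
  show s: "(\<lambda>i. \<bar>x i\<bar> * \<bar>y i\<bar>) summable_on I"
    by (rule nonneg_bdd_above_summable_on) (auto intro!: bdd_aboveI2 fin)
  show "(\<Sum>\<^sub>\<infinity>i\<in>I. \<bar>x i\<bar> * \<bar>y i\<bar>) \<le> sqrt (\<Sum>\<^sub>\<infinity>i\<in>I. (x i)\<^sup>2) * sqrt (\<Sum>\<^sub>\<infinity>i\<in>I. (y i)\<^sup>2)"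
    by (rule infsum_le_finite_sums[OF s fin])
qed

lemma summable_on_norm_product:
  fixes a b :: "'i \<Rightarrow> 'b::real_normed_vector"
  assumes sa: "(\<lambda>k. norm (a k)) summable_on UNIV" and sb: "(\<lambda>k. norm (b k)) summable_on UNIV"
  shows "(\<lambda>(k,l). norm (a k) * norm (b l)) summable_on UNIV"
proof -
  have "(\<Sum>(k,l)\<in>F. norm (a k) * norm (b l)) \<le> (\<Sum>\<^sub>\<infinity>k. norm (a k)) * (\<Sum>\<^sub>\<infinity>k. norm (b k))"
    if F: "finite F" for F
  proof -
    have "(\<Sum>(k,l)\<in>F. norm (a k) * norm (b l)) \<le> (\<Sum>(k,l)\<in>fst ` F \<times> snd ` F. norm (a k) * norm (b l))"
      by (rule sum_mono2) (use F in \<open>auto simp: finite_cartesian_product intro: rev_image_eqI\<close>)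
    also have "\<dots> = (\<Sum>k\<in>fst ` F. norm (a k)) * (\<Sum>l\<in>snd ` F. norm (b l))"
      by (simp add: sum_product sum.cartesian_product)
    also have "\<dots> \<le> (\<Sum>\<^sub>\<infinity>k. norm (a k)) * (\<Sum>\<^sub>\<infinity>k. norm (b k))"
      by (intro mult_mono finite_sum_le_infsum sa sb sum_nonneg infsum_nonneg) (use F in auto)
    finally show ?thesis .
  qed
  then show ?thesis by (intro nonneg_bdd_above_summable_on bdd_aboveI2) auto
qed

lemma has_sum_product:
  fixes a b :: "'i \<Rightarrow> 'b::{real_normed_div_algebra,banach}"
  assumes sa: "(\<lambda>k. norm (a k)) summable_on UNIV" and sb: "(\<lambda>k. norm (b k)) summable_on UNIV"
    and ha: "(a has_sum A) UNIV" and hb: "(b has_sum B) UNIV"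
  shows "((\<lambda>(k,l). a k * b l) has_sum (A * B)) UNIV"
proof -
  have "(\<lambda>(k,l). a k * b l) summable_on UNIV"
    by (rule abs_summable_summable)
       (use summable_on_norm_product[OF sa sb] in \<open>simp add: case_prod_unfold norm_mult\<close>)
  then have "((\<lambda>(k,l). a k * b l) has_sum (A * B)) (Sigma UNIV (\<lambda>_. UNIV))"
    by (intro has_sum_SigmaI[where g = "\<lambda>k. a k * B"] has_sum_cmult_left[OF ha])
       (use has_sum_cmult_right[OF hb] in auto)
  then show ?thesis by simp
qed

lemma summable_on_one_plus_abs_powr:
  assumes "q > 1"
  shows "(\<lambda>k::int. (1 + \<bar>of_int k\<bar>) powr (- q) :: real) summable_on UNIV"
proof -
  define h :: "int \<Rightarrow> real" where "h = (\<lambda>k. (1 + \<bar>of_int k\<bar>) powr (- q))"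
  have "summable (\<lambda>n::nat. (1 + real n) powr (- q))"
    using assms summable_Suc_iff[of "\<lambda>n::nat. real n powr (- q)"]
    by (subst (asm) summable_real_powr_iff) (auto simp: add.commute)
  then have nat: "(\<lambda>n::nat. (1 + real n) powr (- q)) summable_on UNIV"
    by (subst summable_on_UNIV_nonneg_real_iff) auto
  have "h summable_on (range int \<union> range (\<lambda>n. - int n))"
    by (intro summable_on_union; subst summable_on_reindex) (auto simp: inj_on_def h_def o_def nat)
  moreover have "k \<in> range int \<union> range (\<lambda>n. - int n)" for k
    by (cases k rule: int_cases2) auto
  then have "range int \<union> range (\<lambda>n. - int n) = UNIV" by blast
  ultimately show ?thesis by (simp add: h_def)
qed

definition sobolev_weight :: "real \<Rightarrow> int \<Rightarrow> real" where
  "sobolev_weight s k = (1 + (of_int k)\<^sup>2) powr s"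

lemma one_plus_sq_neq_zero [simp]: "1 + x\<^sup>2 \<noteq> (0::real)"
  by (metis add_pos_nonneg zero_le_power2 zero_less_one less_irrefl)

lemma sobolev_weight_pos [simp]: "sobolev_weight s k > 0"
  by (simp add: sobolev_weight_def)

lemma sobolev_weight_nonneg [simp]: "sobolev_weight s k \<ge> 0"
  using sobolev_weight_pos[of s k] by linarith

lemma sobolev_weight_add: "sobolev_weight (a + b) k = sobolev_weight a k * sobolev_weight b k"
  by (simp add: sobolev_weight_def powr_add)

lemma sobolev_weight_half_sq: "(sobolev_weight (r/2) k)\<^sup>2 = sobolev_weight r k"
  using sobolev_weight_add[of "r/2" "r/2" k] by (simp add: power2_eq_square)

lemma summable_on_sobolev_weight:
  assumes p: "p > 1/2"
  shows "sobolev_weight (- p) summable_on UNIV"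
proof (rule summable_on_comparison_test)
  show "(\<lambda>k::int. 2 powr p * (1 + \<bar>of_int k\<bar>) powr (- (2 * p)) :: real) summable_on UNIV"
    by (intro summable_on_cmult_right summable_on_one_plus_abs_powr) (use p in auto)
next
  fix k :: int
  let ?x = "real_of_int k"
  have le: "(1 + \<bar>?x\<bar>)\<^sup>2 / 2 \<le> 1 + ?x\<^sup>2"
    using sum_squares_ge_zero[of "\<bar>?x\<bar> - 1" 0] by (simp add: power2_eq_square algebra_simps)
  have "sobolev_weight (- p) k \<le> ((1 + \<bar>?x\<bar>)\<^sup>2 / 2) powr (- p)"
    unfolding sobolev_weight_def by (rule powr_mono2') (use p le in \<open>auto intro: add_pos_nonneg\<close>)
  also have "\<dots> = 2 powr p * (1 + \<bar>?x\<bar>) powr (- (2 * p))"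
  proof -
    have "(1 + \<bar>?x\<bar>)\<^sup>2 = (1 + \<bar>?x\<bar>) powr 2"
      using powr_realpow[of "1 + \<bar>?x\<bar>" 2] by simp
    then show ?thesis
      by (simp only: powr_divide powr_powr powr_minus_divide) (simp add: powr_minus divide_inverse)
  qed
  finally show "sobolev_weight (- p) k \<le> 2 powr p * (1 + \<bar>?x\<bar>) powr (- (2 * p))" .
qed auto

lemma summable_on_weighted_l2_imp_l1:
  fixes a :: "int \<Rightarrow> real"
  assumes r: "r > 1/2" and sa: "(\<lambda>k. sobolev_weight r k * (a k)\<^sup>2) summable_on UNIV"
  shows "(\<lambda>k. \<bar>a k\<bar>) summable_on UNIV"
    and "(\<Sum>\<^sub>\<infinity>k. \<bar>a k\<bar>)
           \<le> sqrt (\<Sum>\<^sub>\<infinity>k. sobolev_weight (-r) k) * sqrt (\<Sum>\<^sub>\<infinity>k. sobolev_weight r k * (a k)\<^sup>2)"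
proof -
  define x where "x k = sqrt (sobolev_weight (-r) k)" for k
  define y where "y k = sqrt (sobolev_weight r k) * a k" for k
  have "sobolev_weight (-r) k * sobolev_weight r k = 1" for k
    using sobolev_weight_add[of "-r" r k] by (simp add: sobolev_weight_def)
  then have xy: "\<bar>x k\<bar> * \<bar>y k\<bar> = \<bar>a k\<bar>" for k
    by (simp add: x_def y_def abs_mult real_sqrt_mult[symmetric] mult.assoc[symmetric])
  have x2: "(x k)\<^sup>2 = sobolev_weight (-r) k" for k by (simp add: x_def)
  have y2: "(y k)\<^sup>2 = sobolev_weight r k * (a k)\<^sup>2" for k by (simp add: y_def power_mult_distrib)
  note CS = Cauchy_Schwarz_infsum[of x UNIV y]
  from CS summable_on_sobolev_weight[OF r] sa
  show "(\<lambda>k. \<bar>a k\<bar>) summable_on UNIV"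
    and "(\<Sum>\<^sub>\<infinity>k. \<bar>a k\<bar>)
           \<le> sqrt (\<Sum>\<^sub>\<infinity>k. sobolev_weight (-r) k) * sqrt (\<Sum>\<^sub>\<infinity>k. sobolev_weight r k * (a k)\<^sup>2)"
    unfolding xy x2 y2 by simp_all
qed

lemma has_integral_powr_interval:
  fixes r p q :: real
  assumes "0 < p" "p \<le> q" "r \<noteq> -1"
  shows "((\<lambda>w. w powr r) has_integral ((q powr (r+1) - p powr (r+1)) / (r+1))) {p..q}"
proof -
  have "((\<lambda>w. w powr (r+1) / (r+1)) has_vector_derivative w powr r) (at w within {p..q})"
    if "w \<in> {p..q}" for w
  proof -
    have "((\<lambda>w. w powr (r+1) / (r+1)) has_real_derivative (r+1) * w powr (r + 1 - 1) / (r+1)) (at w)"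
      using that assms by (intro DERIV_cdivide has_real_derivative_powr) auto
    then show ?thesis
      using assms by (simp add: has_real_derivative_iff_has_vector_derivative
          has_vector_derivative_at_within add_eq_0_iff)
  qed
  from fundamental_theorem_of_calculus[OF assms(2) this] show ?thesis
    by (simp add: diff_divide_distrib)
qed

lemma norm_integral_le_powr:
  fixes F :: "real \<Rightarrow> 'b::euclidean_space"
  assumes "0 < p" "p \<le> q" "r \<noteq> -1" "continuous_on {p..q} F"
    and "\<And>w. w \<in> {p..q} \<Longrightarrow> norm (F w) \<le> c * w powr r"
  shows "norm (integral {p..q} F) \<le> c * ((q powr (r+1) - p powr (r+1)) / (r+1))"
proof -
  note I = has_integral_powr_interval[OF assms(1-3)]
  have "norm (integral {p..q} F) \<le> integral {p..q} (\<lambda>w. c * w powr r)"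
    using assms(5) integrable_continuous_interval[OF assms(4)]
      integrable_on_mult_right[OF has_integral_integrable[OF I]]
    by (intro integral_norm_bound_integral) auto
  also have "\<dots> = c * ((q powr (r+1) - p powr (r+1)) / (r+1))"
    using integral_unique[OF I] by simp
  finally show ?thesis .
qed

lemma
  fixes u :: "'i \<Rightarrow> 'a::topological_space \<Rightarrow> 'b::banach"
  assumes M: "M summable_on UNIV" and bound: "\<And>i x. x \<in> S \<Longrightarrow> norm (u i x) \<le> M i"
    and cont: "\<And>i. continuous_on S (u i)"
  shows uniform_limit_infsum_dominated:
      "uniform_limit S (\<lambda>F x. \<Sum>i\<in>F. u i x) (\<lambda>x. \<Sum>\<^sub>\<infinity>i. u i x) (finite_subsets_at_top UNIV)"
    and continuous_on_infsum_dominated: "continuous_on S (\<lambda>x. \<Sum>\<^sub>\<infinity>i. u i x)"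
proof -
  show ul: "uniform_limit S (\<lambda>F x. \<Sum>i\<in>F. u i x) (\<lambda>x. \<Sum>\<^sub>\<infinity>i. u i x) (finite_subsets_at_top UNIV)"
    using bound by (intro Weierstrass_m_test_general[OF _ M]) auto
  show "continuous_on S (\<lambda>x. \<Sum>\<^sub>\<infinity>i. u i x)"
    by (rule uniform_limit_theorem[OF _ ul]) (auto intro!: always_eventually continuous_on_sum cont)
qed

lemma has_sum_integral_infsum_dominated:
  fixes u :: "'i \<Rightarrow> real \<Rightarrow> 'b::euclidean_space"
  assumes M: "M summable_on UNIV" and bound: "\<And>i x. x \<in> {a..c} \<Longrightarrow> norm (u i x) \<le> M i"
    and cont: "\<And>i. continuous_on {a..c} (u i)"
  shows "((\<lambda>i. integral {a..c} (u i)) has_sum integral {a..c} (\<lambda>x. \<Sum>\<^sub>\<infinity>i. u i x)) UNIV"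
proof -
  have cF: "continuous_on {a..c} (\<lambda>x. \<Sum>i\<in>F. u i x)" for F
    by (intro continuous_on_sum cont)
  obtain I J where IJ: "\<And>F. ((\<lambda>x. \<Sum>i\<in>F. u i x) has_integral I F) {a..c}"
     "((\<lambda>x. \<Sum>\<^sub>\<infinity>i. u i x) has_integral J) {a..c}" "(I \<longlongrightarrow> J) (finite_subsets_at_top UNIV)"
    by (rule uniform_limit_integral[OF uniform_limit_infsum_dominated[OF M bound cont] cF]) auto
  have "I F = (\<Sum>i\<in>F. integral {a..c} (u i))" if "finite F" for F
    using IJ(1)[of F] that
    by (metis has_integral_sum has_integral_unique integrable_continuous_interval
        integrable_integral cont)
  with IJ(3) have "((\<lambda>F. \<Sum>i\<in>F. integral {a..c} (u i)) \<longlongrightarrow> J) (finite_subsets_at_top UNIV)"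
    by (auto intro: tendsto_cong[THEN iffD1] eventually_finite_subsets_at_top_weakI)
  then show ?thesis
    using integral_unique[OF IJ(2)] by (simp add: has_sum_def)
qed

lemma has_integral_symmetric_shell:
  fixes \<phi> :: "real \<Rightarrow> 'b::euclidean_space"
  assumes "0 < \<epsilon>" "\<epsilon> \<le> r" and c: "continuous_on {w. \<epsilon> \<le> \<bar>w\<bar> \<and> \<bar>w\<bar> \<le> r} \<phi>"
  shows "(\<phi> has_integral integral {\<epsilon>..r} (\<lambda>w. \<phi> w + \<phi> (-w))) {w. \<epsilon> \<le> \<bar>w\<bar> \<and> \<bar>w\<bar> \<le> r}"
proof -
  have shell: "{w. \<epsilon> \<le> \<bar>w\<bar> \<and> \<bar>w\<bar> \<le> r} = {-r..-\<epsilon>} \<union> {\<epsilon>..r}" using assms by auto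
  have c1: "continuous_on {\<epsilon>..r} \<phi>"
    using c by (rule continuous_on_subset) (use assms in auto)
  have c2: "continuous_on {\<epsilon>..r} (\<lambda>w. \<phi> (-w))"
    by (intro continuous_on_compose2[OF c]) (use assms in \<open>auto intro!: continuous_intros\<close>)
  have "(\<phi> has_integral integral {\<epsilon>..r} (\<lambda>w. \<phi> (-w))) {-r..-\<epsilon>}"
    using has_integral_reflect_real[of \<phi> _ "-\<epsilon>" "-r"]
      integrable_integral[OF integrable_continuous_interval[OF c2]] by simp
  then have "(\<phi> has_integral (integral {\<epsilon>..r} (\<lambda>w. \<phi> (-w)) + integral {\<epsilon>..r} \<phi>)) ({-r..-\<epsilon>} \<union> {\<epsilon>..r})"
    using integrable_continuous_interval[OF c1]
    by (intro has_integral_Un) (use assms in \<open>auto simp: disjoint_iff\<close>)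
  moreover have "integral {\<epsilon>..r} (\<lambda>w. \<phi> w + \<phi> (-w)) = integral {\<epsilon>..r} \<phi> + integral {\<epsilon>..r} (\<lambda>w. \<phi> (-w))"
    by (rule integral_add[OF integrable_continuous_interval[OF c1] integrable_continuous_interval[OF c2]])
  ultimately show ?thesis unfolding shell by (simp add: add.commute)
qed

section \<open>Fourier coefficients of smooth periodic functions\<close>

definition e2pi :: "real \<Rightarrow> complex" where
  "e2pi t = exp (2 * pi * \<i> * of_real t)"

lemma e2pi_add: "e2pi (a + b) = e2pi a * e2pi b"
  by (simp add: e2pi_def distrib_left exp_add)

lemma e2pi_0 [simp]: "e2pi 0 = 1"
  by (simp add: e2pi_def)

lemma norm_e2pi [simp]: "norm (e2pi t) = 1"
  by (simp add: e2pi_def norm_exp_eq_Re)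

lemma e2pi_of_int [simp]: "e2pi (of_int k) = 1"
  using exp_integer_2pi[of "of_int k"] by (simp add: e2pi_def mult_ac)

lemma e2pi_minus: "e2pi (- t) = cnj (e2pi t)"
  by (simp add: e2pi_def exp_cnj)

lemma e2pi_eq_cis: "e2pi t = cis (2 * pi * t)"
  by (simp add: e2pi_def cis_conv_exp mult_ac)

lemma norm_e2pi_diff_e2pi_minus: "cmod (e2pi y - e2pi (- y)) = 2 * \<bar>sin (2 * pi * y)\<bar>"
proof -
  have "e2pi y - e2pi (- y) = 2 * \<i> * sin (complex_of_real (2 * pi * y))"
    by (simp add: sin_exp_eq e2pi_def mult_ac)
  also have "\<dots> = 2 * \<i> * complex_of_real (sin (2 * pi * y))"
    by (simp only: sin_of_real)
  finally show ?thesis by (simp add: norm_mult)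
qed

lemma continuous_on_e2pi [continuous_intros]:
  "continuous_on S g \<Longrightarrow> continuous_on S (\<lambda>x. e2pi (g x))"
  unfolding e2pi_def by (intro continuous_intros)

lemma has_vector_derivative_e2pi:
  "((\<lambda>x. e2pi (c * x)) has_vector_derivative (2 * pi * \<i> * of_real c * e2pi (c * x))) (at x within S)"
proof -
  have "((\<lambda>z. exp (2 * pi * \<i> * of_real c * z)) has_field_derivative
        (exp (2 * pi * \<i> * of_real c * of_real x) * (2 * pi * \<i> * of_real c))) (at (of_real x))"
    by (auto intro!: derivative_eq_intros)
  from has_vector_derivative_real_field[OF this] show ?thesis
    by (simp add: e2pi_def mult_ac)
qed

lemma integral_e2pi:
  "integral {0..1} (\<lambda>x. e2pi (of_int k * x)) = (if k = 0 then 1 else 0)"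
proof (cases "k = 0")
  case False
  define c where "c = 2 * pi * \<i> * of_int k"
  have "c \<noteq> 0" using False by (simp add: c_def)
  then have "((\<lambda>x. e2pi (of_int k * x) / c) has_vector_derivative e2pi (of_int k * x)) (at x within {0..1})" for x
    using has_vector_derivative_e2pi[of "of_int k" x "{0..1}"]
    by (auto dest: has_vector_derivative_divide[where a=c] simp: c_def)
  from fundamental_theorem_of_calculus[OF _ this]
  have "((\<lambda>x. e2pi (of_int k * x)) has_integral (e2pi (of_int k) / c - e2pi 0 / c)) {0..1}" by simp
  then show ?thesis using False by (simp add: integral_unique)
qed simp

definition cfourier_coeff :: "(real \<Rightarrow> complex) \<Rightarrow> int \<Rightarrow> complex" where
  "cfourier_coeff \<phi> n = integral {0..1} (\<lambda>x. \<phi> x * e2pi (- of_int n * x))"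

lemma fourier_coeff_eq_cfourier_coeff: "fourier_coeff f k = cfourier_coeff (\<lambda>x. of_real (f x)) k"
  unfolding fourier_coeff_def cfourier_coeff_def e2pi_def by (simp add: mult_ac)

lemma norm_cfourier_coeff_le:
  assumes "continuous_on {0..1} \<phi>" "\<And>x. x \<in> {0..1} \<Longrightarrow> norm (\<phi> x) \<le> B"
  shows "norm (cfourier_coeff \<phi> n) \<le> B"
proof -
  have "norm (cfourier_coeff \<phi> n) \<le> B * (1 - 0)"
    unfolding cfourier_coeff_def
    by (rule integral_bound) (use assms in \<open>auto intro!: continuous_intros simp: norm_mult\<close>)
  then show ?thesis by simp
qed

lemma periodic1_of_int: "periodic1 g \<Longrightarrow> g (x + of_int k) = g x"
proof (induction k arbitrary: x rule: int_induct[where k=0])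
  case (step1 i)
  then show ?case by (metis add.assoc of_int_add of_int_1 periodic1_def)
next
  case (step2 i)
  have "g (x + of_int i) = g ((x + of_int (i - 1)) + 1)" by (simp add: algebra_simps)
  also have "\<dots> = g (x + of_int (i - 1))" using step2(3) unfolding periodic1_def by blast
  finally show ?case using step2 by simp
qed simp

lemma periodic1_deriv:
  assumes p: "periodic1 g" and d: "\<And>x. g differentiable (at x)"
  shows "periodic1 (deriv g)"
  unfolding periodic1_def
proof
  fix x
  have "DERIV g (x + 1) :> deriv g (x + 1)"
    using d DERIV_deriv_iff_real_differentiable by blast
  then have "((\<lambda>y. g (y + 1)) has_field_derivative deriv g (x + 1)) (at x)"
    by (simp add: DERIV_shift)
  moreover have "(\<lambda>y. g (y + 1)) = g" using p by (auto simp: periodic1_def)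
  ultimately show "deriv g (x + 1) = deriv g x"
    by (metis DERIV_imp_deriv)
qed

lemma smooth_fun_DERIV: "smooth_fun f \<Longrightarrow> DERIV ((deriv ^^ n) f) x :> (deriv ^^ Suc n) f x"
  using DERIV_deriv_iff_real_differentiable by (fastforce simp: smooth_fun_def)

lemma smooth_fun_continuous_on: "smooth_fun f \<Longrightarrow> continuous_on S ((deriv ^^ n) f)"
  by (meson continuous_at_imp_continuous_on differentiable_imp_continuous_within smooth_fun_def)

lemma continuous_on_smooth_fun: "smooth_fun f \<Longrightarrow> continuous_on S f"
  using smooth_fun_continuous_on[of f S 0] by simp

lemma periodic1_deriv_iterate: "smooth_fun f \<Longrightarrow> periodic1 f \<Longrightarrow> periodic1 ((deriv ^^ n) f)"
  by (induction n) (auto intro: periodic1_deriv simp: smooth_fun_def)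

lemma cfourier_coeff_deriv:
  fixes g g' :: "real \<Rightarrow> real"
  assumes p: "periodic1 g" and d: "\<And>x. DERIV g x :> g' x" and c: "continuous_on {0..1} g'"
  shows "cfourier_coeff (\<lambda>x. of_real (g' x)) n = 2 * pi * \<i> * of_int n * cfourier_coeff (\<lambda>x. of_real (g x)) n"
proof -
  define h where "h x = complex_of_real (g x) * e2pi (- of_int n * x)" for x
  define c where "c = 2 * pi * \<i> * of_int n"
  have cg: "continuous_on {0..1} g"
    using d by (meson DERIV_isCont continuous_at_imp_continuous_on)
  have "(h has_vector_derivative
          (- c * (complex_of_real (g x) * e2pi (- of_int n * x)) + complex_of_real (g' x) * e2pi (- of_int n * x)))
          (at x within {0..1})" for x
    unfolding h_def c_def
    by (rule has_vector_derivative_mult[OF has_vector_derivative_of_real has_vector_derivative_e2pi,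
          THEN has_vector_derivative_eq_rhs]) (auto intro: DERIV_subset[OF d] simp: algebra_simps)
  from fundamental_theorem_of_calculus[OF _ this]
  have "((\<lambda>x. - c * (complex_of_real (g x) * e2pi (- of_int n * x)) + complex_of_real (g' x) * e2pi (- of_int n * x))
          has_integral (h 1 - h 0)) {0..1}" by simp
  moreover have "h 1 = h 0"
  proof -
    have "e2pi (- of_int n) = 1" by (metis e2pi_of_int of_int_minus)
    moreover have "g 1 = g 0" using p unfolding periodic1_def by (metis add_0)
    ultimately show ?thesis by (simp add: h_def)
  qed
  ultimately have "integral {0..1} (\<lambda>x. - c * (complex_of_real (g x) * e2pi (- of_int n * x))
                     + complex_of_real (g' x) * e2pi (- of_int n * x)) = 0"
    by (simp add: integral_unique)
  moreover have "integral {0..1} (\<lambda>x. - c * (complex_of_real (g x) * e2pi (- of_int n * x))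
                     + complex_of_real (g' x) * e2pi (- of_int n * x))
      = - c * cfourier_coeff (\<lambda>x. of_real (g x)) n + cfourier_coeff (\<lambda>x. of_real (g' x)) n"
    unfolding cfourier_coeff_def
    by (subst integral_add) (auto intro!: integrable_continuous_interval continuous_intros cg c)
  ultimately have "- c * cfourier_coeff (\<lambda>x. of_real (g x)) n + cfourier_coeff (\<lambda>x. of_real (g' x)) n = 0"
    by simp
  then show ?thesis by (simp add: c_def algebra_simps add_eq_0_iff)
qed

lemma cfourier_coeff_deriv_iterate:
  assumes s: "smooth_fun f" and p: "periodic1 f"
  shows "cfourier_coeff (\<lambda>x. of_real ((deriv ^^ N) f x)) k
           = (2 * pi * \<i> * of_int k) ^ N * cfourier_coeff (\<lambda>x. of_real (f x)) k"
proof (induction N)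
  case (Suc N)
  have "cfourier_coeff (\<lambda>x. of_real ((deriv ^^ Suc N) f x)) k
          = 2 * pi * \<i> * of_int k * cfourier_coeff (\<lambda>x. of_real ((deriv ^^ N) f x)) k"
    by (rule cfourier_coeff_deriv[OF periodic1_deriv_iterate[OF s p] smooth_fun_DERIV[OF s]
          smooth_fun_continuous_on[OF s]])
  then show ?case using Suc by simp
qed simp

lemma fourier_coeff_bound_deriv:
  assumes s: "smooth_fun f" and p: "periodic1 f"
    and M: "\<And>x. x \<in> {0..1} \<Longrightarrow> norm ((deriv ^^ N) f x) \<le> M"
  shows "\<bar>of_int k\<bar> ^ N * cmod (fourier_coeff f k) \<le> M"
proof -
  have "cmod ((2 * pi * \<i> * of_int k) ^ N * fourier_coeff f k) \<le> M"
    unfolding fourier_coeff_eq_cfourier_coeff cfourier_coeff_deriv_iterate[OF s p, symmetric]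
    by (rule norm_cfourier_coeff_le) (use M in \<open>auto intro!: continuous_intros smooth_fun_continuous_on[OF s]\<close>)
  then have "(2 * pi * \<bar>of_int k\<bar>) ^ N * cmod (fourier_coeff f k) \<le> M"
    by (simp add: norm_mult norm_power)
  moreover have "\<bar>of_int k\<bar> ^ N * cmod (fourier_coeff f k) \<le> (2 * pi * \<bar>of_int k\<bar>) ^ N * cmod (fourier_coeff f k)"
    using pi_gt3 by (intro mult_right_mono power_mono) (auto simp: mult_le_cancel_right1)
  ultimately show ?thesis by linarith
qed

lemma fourier_coeff_decay:
  assumes s: "smooth_fun f" and p: "periodic1 f"
  obtains B where "\<And>k. (1 + (of_int k)\<^sup>2) ^ N * (cmod (fourier_coeff f k))\<^sup>2 \<le> B"
proof -
  obtain M where M: "\<And>x. x \<in> {0..1} \<Longrightarrow> norm ((deriv ^^ N) f x) \<le> M"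
    using continuous_on_compact_bound[OF compact_Icc smooth_fun_continuous_on[OF s]] by blast
  obtain M0 where M0: "\<And>x. x \<in> {0..1} \<Longrightarrow> norm ((deriv ^^ 0) f x) \<le> M0"
    using continuous_on_compact_bound[OF compact_Icc smooth_fun_continuous_on[OF s]] by blast
  have "(1 + (of_int k)\<^sup>2) ^ N * (cmod (fourier_coeff f k))\<^sup>2 \<le> max (2 ^ N * M\<^sup>2) (M0\<^sup>2)" for k
  proof (cases "k = 0")
    case True
    then show ?thesis
      using fourier_coeff_bound_deriv[OF s p M0, of k] by (simp add: power_mono le_max_iff_disj)
  next
    case False
    let ?a = "cmod (fourier_coeff f k)"
    have "1 \<le> \<bar>real_of_int k\<bar>" using False by linarith
    then have "1 + (of_int k)\<^sup>2 \<le> 2 * (\<bar>of_int k :: real\<bar>)\<^sup>2"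
      using one_le_power[of "\<bar>real_of_int k\<bar>" 2] by simp
    then have "(1 + (of_int k)\<^sup>2) ^ N * ?a\<^sup>2 \<le> (2 * (\<bar>of_int k :: real\<bar>)\<^sup>2) ^ N * ?a\<^sup>2"
      by (intro mult_right_mono power_mono) auto
    also have "\<dots> = 2 ^ N * (\<bar>of_int k :: real\<bar> ^ N * ?a)\<^sup>2"
      by (simp add: power_mult_distrib power2_eq_square power_mult[symmetric] mult_ac)
         (metis power_abs abs_mult_self_eq power_mult_distrib)
    also have "\<dots> \<le> 2 ^ N * M\<^sup>2"
      using fourier_coeff_bound_deriv[OF s p M] by (intro mult_left_mono power_mono) auto
    finally show ?thesis by simp
  qed
  then show ?thesis using that by blast
qed

lemma summable_on_sobolev_weight_fourier_coeff:
  assumes s: "smooth_fun f" and p: "periodic1 f"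
  shows "(\<lambda>k. sobolev_weight r k * (cmod (fourier_coeff f k))\<^sup>2) summable_on UNIV"
proof -
  obtain N :: nat where N: "real N \<ge> r + 1"
    using real_arch_simple by blast
  obtain B where B: "\<And>k. (1 + (of_int k)\<^sup>2) ^ N * (cmod (fourier_coeff f k))\<^sup>2 \<le> B"
    using fourier_coeff_decay[OF s p] by blast
  show ?thesis
  proof (rule summable_on_comparison_test)
    show "(\<lambda>k. B * sobolev_weight (r - N) k) summable_on UNIV"
      using summable_on_sobolev_weight[of "N - r"] N
      by (intro summable_on_cmult_right) (simp add: minus_diff_eq)
  next
    fix k :: int
    have "sobolev_weight r k = sobolev_weight (r - N) k * (1 + (of_int k)\<^sup>2) ^ N"
      using sobolev_weight_add[of "r - N" N k] by (simp add: sobolev_weight_def powr_realpow add_pos_nonneg)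
    then show "sobolev_weight r k * (cmod (fourier_coeff f k))\<^sup>2 \<le> B * sobolev_weight (r - N) k"
      using mult_left_mono[OF B[of k], of "sobolev_weight (r - N) k"] by (simp add: mult_ac)
  qed auto
qed

lemma summable_on_norm_fourier_coeff:
  assumes "smooth_fun f" "periodic1 f"
  shows "(\<lambda>k. cmod (fourier_coeff f k)) summable_on UNIV"
  using summable_on_weighted_l2_imp_l1(1)[of 1 "\<lambda>k. cmod (fourier_coeff f k)"]
    summable_on_sobolev_weight_fourier_coeff[OF assms, of 1] by simp

section \<open>Fourier inversion\<close>

definition circle_fun :: "(real \<Rightarrow> real) \<Rightarrow> complex \<Rightarrow> real" where
  "circle_fun \<psi> z = \<psi> (Arg z / (2 * pi))"

lemma periodic1_cis_eq:
  assumes p: "periodic1 \<psi>" and c: "cis a = cis b"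
  shows "\<psi> (a / (2 * pi)) = \<psi> (b / (2 * pi))"
proof -
  from c have "exp (\<i> * complex_of_real a) = exp (\<i> * complex_of_real b)"
    by (simp add: cis_conv_exp)
  then obtain n :: int where "\<i> * complex_of_real a = \<i> * complex_of_real b + (of_int (2 * n) * pi) * \<i>"
    using exp_eq by blast
  then have "complex_of_real a = complex_of_real (b + 2 * n * pi)"
    by (simp add: algebra_simps)
       (metis (no_types, lifting) complex_i_not_zero mult.commute mult_left_cancel ring_class.ring_distribs(1))
  then have "a = b + 2 * n * pi"
    using of_real_eq_iff by blast
  then have "a / (2 * pi) = b / (2 * pi) + of_int n"
    by (simp add: field_simps)
  then show ?thesis using periodic1_of_int[OF p] by simp
qed

lemma circle_fun_e2pi: "periodic1 \<psi> \<Longrightarrow> circle_fun \<psi> (e2pi x) = \<psi> x"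
  using periodic1_cis_eq[of \<psi> "Arg (e2pi x)" "2 * pi * x"] cis_Arg[of "e2pi x"]
  by (simp add: circle_fun_def e2pi_eq_cis)

lemma circle_fun_Arg2pi:
  assumes p: "periodic1 \<psi>" and z: "z \<noteq> 0"
  shows "circle_fun \<psi> z = \<psi> (Arg2pi z / (2 * pi))"
proof -
  have "z = of_real (norm z) * cis (Arg2pi z)"
    using Arg2pi[of z] by (simp add: is_Arg_def cis_conv_exp)
  then have "cis (Arg2pi z) = sgn z"
    using z by (simp add: sgn_eq) (metis nonzero_mult_div_cancel_left norm_eq_zero of_real_eq_0_iff)
  then have "cis (Arg z) = cis (Arg2pi z)" using cis_Arg[OF z] by simp
  from periodic1_cis_eq[OF p this] show ?thesis by (simp add: circle_fun_def)
qed

text \<open>On the negative real axis, where \<open>Arg\<close> jumps, continuity is read off the other branch \<open>Arg2pi\<close>.\<close>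

lemma continuous_on_circle_fun:
  assumes p: "periodic1 \<psi>" and c: "continuous_on UNIV \<psi>"
  shows "continuous_on (sphere 0 1) (circle_fun \<psi>)"
proof (rule continuous_at_imp_continuous_on, intro ballI)
  fix z :: complex assume "z \<in> sphere 0 1"
  then have z: "z \<noteq> 0" by auto
  have cpsi: "isCont \<psi> x" for x using c by (simp add: continuous_on_eq_continuous_at)
  show "isCont (circle_fun \<psi>) z"
  proof (cases "z \<in> \<real>\<^sub>\<le>\<^sub>0")
    case False
    have "isCont (\<lambda>z. Arg z / (2 * pi)) z"
      using continuous_at_Arg[OF False] by (intro continuous_intros) auto
    then show ?thesis unfolding circle_fun_def using cpsi by (rule isCont_o2)
  next
    case True
    then have "z \<notin> \<real>\<^sub>\<ge>\<^sub>0"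
      using z by (metis complex_nonneg_Reals_iff complex_nonpos_Reals_iff complex_eq_iff
          less_eq_real_def nle_le zero_complex.sel(1) zero_complex.sel(2))
    then have "isCont (\<lambda>z. Arg2pi z / (2 * pi)) z"
      using continuous_at_Arg2pi by (intro continuous_intros) auto
    then have "isCont (\<lambda>z. \<psi> (Arg2pi z / (2 * pi))) z" using cpsi by (rule isCont_o2)
    then show ?thesis
    proof (rule continuous_transform_within[where \<delta> = "norm z"])
      fix w assume "dist w z < norm z"
      then have "w \<noteq> 0" by (auto simp: dist_norm)
      then show "\<psi> (Arg2pi w / (2 * pi)) = circle_fun \<psi> w" using circle_fun_Arg2pi[OF p] by simp
    qed (use z in auto)
  qed
qed

definition trig_poly :: "(int \<times> complex) list \<Rightarrow> real \<Rightarrow> complex" where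
  "trig_poly xs x = (\<Sum>(k,c)\<leftarrow>xs. c * e2pi (of_int k * x))"

lemma trig_poly_Nil [simp]: "trig_poly [] x = 0"
  by (simp add: trig_poly_def)

lemma trig_poly_Cons [simp]: "trig_poly (kc # xs) x = snd kc * e2pi (of_int (fst kc) * x) + trig_poly xs x"
  by (simp add: trig_poly_def split: prod.splits)

lemma trig_poly_append: "trig_poly (xs @ ys) x = trig_poly xs x + trig_poly ys x"
  by (simp add: trig_poly_def)

lemma trig_poly_scale: "trig_poly (map (\<lambda>(k,c). (k, a * c)) xs) x = a * trig_poly xs x"
  by (induction xs) (auto simp: algebra_simps)

lemma continuous_on_trig_poly [continuous_intros]: "continuous_on S (trig_poly xs)"
  by (induction xs) (auto intro!: continuous_intros)

definition trig_poly_mult :: "(int \<times> complex) list \<Rightarrow> (int \<times> complex) list \<Rightarrow> (int \<times> complex) list" where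
  "trig_poly_mult xs ys = concat (map (\<lambda>(k,c). map (\<lambda>(l,d). (k + l, c * d)) ys) xs)"

lemma trig_poly_mult: "trig_poly (trig_poly_mult xs ys) x = trig_poly xs x * trig_poly ys x"
proof (induction xs)
  case (Cons a xs)
  obtain k c where a: "a = (k, c)" by force
  have "trig_poly (map (\<lambda>(l,d). (k + l, c * d)) ys) x = c * e2pi (of_int k * x) * trig_poly ys x"
    by (induction ys) (auto simp: algebra_simps e2pi_add[symmetric])
  then show ?case using Cons by (simp add: trig_poly_mult_def a trig_poly_append algebra_simps)
qed (simp add: trig_poly_mult_def)

lemma real_polynomial_function_on_circle_trig_poly:
  assumes "real_polynomial_function p"
  shows "\<exists>xs. \<forall>x. complex_of_real (p (e2pi x)) = trig_poly xs x"
  using assms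
proof (induction rule: real_polynomial_function.induct)
  case (linear p)
  define A where "A = complex_of_real (p 1) / 2 - \<i> * complex_of_real (p \<i>) / 2"
  define B where "B = complex_of_real (p 1) / 2 + \<i> * complex_of_real (p \<i>) / 2"
  have "complex_of_real (p (e2pi x)) = trig_poly [(1, A), (-1, B)] x" for x
  proof -
    let ?w = "e2pi x"
    note lin = bounded_linear.linear[OF linear]
    have "?w = Re ?w *\<^sub>R 1 + Im ?w *\<^sub>R \<i>" by (simp add: complex_eq_iff)
    then have "p ?w = p (Re ?w *\<^sub>R 1 + Im ?w *\<^sub>R \<i>)" by simp
    also have "\<dots> = Re ?w * p 1 + Im ?w * p \<i>"
      by (simp add: linear_add[OF lin] linear_scale[OF lin])
    finally have "complex_of_real (p ?w)
        = complex_of_real (Re ?w) * complex_of_real (p 1) + complex_of_real (Im ?w) * complex_of_real (p \<i>)"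
      by simp
    moreover have "complex_of_real (Re ?w) = (?w + e2pi (of_int (-1) * x)) / 2"
      by (simp add: complex_add_cnj e2pi_minus)
    moreover have "complex_of_real (Im ?w) = - \<i> * (?w - e2pi (of_int (-1) * x)) / 2"
      by (simp add: e2pi_minus complex_diff_cnj)
         (metis (no_types, lifting) complex_i_mult_minus minus_minus mult.commute mult.left_commute)
    ultimately show ?thesis by (simp add: A_def B_def field_simps)
  qed
  then show ?case by blast
next
  case (const c)
  have "complex_of_real c = trig_poly [(0, of_real c)] x" for x by simp
  then show ?case by blast
next
  case (add f g)
  then obtain xs ys where "\<forall>x. complex_of_real (f (e2pi x)) = trig_poly xs x"
    "\<forall>x. complex_of_real (g (e2pi x)) = trig_poly ys x" by blast
  then have "\<forall>x. complex_of_real (f (e2pi x) + g (e2pi x)) = trig_poly (xs @ ys) x"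
    by (simp add: trig_poly_append)
  then show ?case by blast
next
  case (mult f g)
  then obtain xs ys where "\<forall>x. complex_of_real (f (e2pi x)) = trig_poly xs x"
    "\<forall>x. complex_of_real (g (e2pi x)) = trig_poly ys x" by blast
  then have "\<forall>x. complex_of_real (f (e2pi x) * g (e2pi x)) = trig_poly (trig_poly_mult xs ys) x"
    by (simp add: trig_poly_mult)
  then show ?case by blast
qed

lemma trig_poly_approx_real:
  assumes p: "periodic1 \<psi>" and c: "continuous_on UNIV \<psi>" and e: "e > 0"
  obtains xs where "\<And>x. cmod (complex_of_real (\<psi> x) - trig_poly xs x) < e"
proof -
  obtain g where g: "real_polynomial_function g" "\<And>z. z \<in> sphere 0 1 \<Longrightarrow> \<bar>circle_fun \<psi> z - g z\<bar> < e"
    using Stone_Weierstrass_real_polynomial_function[OF compact_sphere continuous_on_circle_fun[OF p c] e]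
    by blast
  obtain xs where xs: "\<forall>x. complex_of_real (g (e2pi x)) = trig_poly xs x"
    using real_polynomial_function_on_circle_trig_poly[OF g(1)] by blast
  have "cmod (complex_of_real (\<psi> x) - trig_poly xs x) < e" for x
    using g(2)[of "e2pi x"] xs circle_fun_e2pi[OF p]
    by (metis mem_sphere_0 norm_e2pi norm_of_real of_real_diff real_norm_def)
  then show ?thesis using that by blast
qed

lemma trig_poly_approx:
  fixes \<phi> :: "real \<Rightarrow> complex"
  assumes c: "continuous_on UNIV \<phi>" and p: "\<And>x. \<phi> (x + 1) = \<phi> x" and e: "e > 0"
  obtains xs where "\<And>x. cmod (\<phi> x - trig_poly xs x) \<le> e"
proof -
  have "periodic1 (\<lambda>x. Re (\<phi> x))" "periodic1 (\<lambda>x. Im (\<phi> x))"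
    using p by (auto simp: periodic1_def)
  moreover have "continuous_on UNIV (\<lambda>x. Re (\<phi> x))" "continuous_on UNIV (\<lambda>x. Im (\<phi> x))"
    using c by (auto intro!: continuous_intros)
  ultimately obtain xs1 xs2
    where xs1: "\<And>x. cmod (complex_of_real (Re (\<phi> x)) - trig_poly xs1 x) < e/2"
      and xs2: "\<And>x. cmod (complex_of_real (Im (\<phi> x)) - trig_poly xs2 x) < e/2"
    using trig_poly_approx_real e by (metis half_gt_zero)
  let ?xs = "xs1 @ map (\<lambda>(k,c). (k, \<i> * c)) xs2"
  have "cmod (\<phi> x - trig_poly ?xs x) \<le> e" for x
  proof -
    have "trig_poly ?xs x = trig_poly xs1 x + \<i> * trig_poly xs2 x"
      by (simp add: trig_poly_append trig_poly_scale)
    then have "\<phi> x - trig_poly ?xs x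
        = (complex_of_real (Re (\<phi> x)) - trig_poly xs1 x) + \<i> * (complex_of_real (Im (\<phi> x)) - trig_poly xs2 x)"
      by (simp add: algebra_simps complex_eq_iff)
    then show ?thesis
      using norm_triangle_ineq[of "complex_of_real (Re (\<phi> x)) - trig_poly xs1 x"
          "\<i> * (complex_of_real (Im (\<phi> x)) - trig_poly xs2 x)"] xs1[of x] xs2[of x]
      by (simp add: norm_mult)
  qed
  then show ?thesis using that by blast
qed

lemma integral_mult_cnj_trig_poly:
  assumes c: "continuous_on {0..1} \<phi>" and z: "\<And>n. cfourier_coeff \<phi> n = 0"
  shows "integral {0..1} (\<lambda>x. \<phi> x * cnj (trig_poly xs x)) = 0"
proof (induction xs)
  case (Cons a xs)
  obtain k d where a: "a = (k, d)" by force
  have "(\<lambda>x. \<phi> x * cnj (trig_poly (a # xs) x))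
      = (\<lambda>x. cnj d * (\<phi> x * e2pi (- of_int k * x)) + \<phi> x * cnj (trig_poly xs x))"
    by (auto simp: a algebra_simps e2pi_minus)
  moreover have "integral {0..1} (\<lambda>x. cnj d * (\<phi> x * e2pi (- of_int k * x)) + \<phi> x * cnj (trig_poly xs x))
      = cnj d * cfourier_coeff \<phi> k + integral {0..1} (\<lambda>x. \<phi> x * cnj (trig_poly xs x))"
    unfolding cfourier_coeff_def
    by (subst integral_add) (auto intro!: integrable_continuous_interval continuous_intros c)
  ultimately show ?case using Cons z by simp
qed simp

text \<open>If all coefficients vanish, \<open>\<phi>\<close> is orthogonal to every trigonometric polynomial \<open>T\<close>, so
  \<open>\<integral>\<bar>\<phi>\<bar>\<^sup>2 = \<integral>\<phi> (\<phi> - T)\<^sup>*\<close>, which is small when \<open>T\<close> approximates \<open>\<phi>\<close> uniformly.\<close>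

lemma integral_norm_sq_eq_0_if_cfourier_coeff_eq_0:
  fixes \<phi> :: "real \<Rightarrow> complex"
  assumes c: "continuous_on UNIV \<phi>" and p: "\<And>x. \<phi> (x + 1) = \<phi> x"
    and z: "\<And>n. cfourier_coeff \<phi> n = 0"
  shows "integral {0..1} (\<lambda>x. (cmod (\<phi> x))\<^sup>2) = 0"
proof -
  define I where "I = integral {0..1} (\<lambda>x. (cmod (\<phi> x))\<^sup>2)"
  have c01: "continuous_on {0..1} \<phi>" using c by (rule continuous_on_subset) auto
  obtain M where M: "M \<ge> 0" "\<And>x. x \<in> {0..1} \<Longrightarrow> norm (\<phi> x) \<le> M"
    using continuous_on_compact_bound[OF compact_Icc c01] by blast
  have cI: "continuous_on {0..1} (\<lambda>x. (cmod (\<phi> x))\<^sup>2)" using c01 by (intro continuous_intros)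
  have "I \<le> 0 + e" if e: "e > 0" for e
  proof -
    have "e / (M + 1) > 0" using e M(1) by simp
    then obtain xs where xs: "\<And>x. cmod (\<phi> x - trig_poly xs x) \<le> e / (M + 1)"
      using trig_poly_approx[OF c p] by blast
    have "complex_of_real I = integral {0..1} (\<lambda>x. complex_of_real ((cmod (\<phi> x))\<^sup>2))"
      unfolding I_def
      by (rule integral_linear[OF integrable_continuous_interval[OF cI] bounded_linear_of_real,
            symmetric, unfolded o_def])
    also have "\<dots> = integral {0..1} (\<lambda>x. \<phi> x * cnj (\<phi> x - trig_poly xs x) + \<phi> x * cnj (trig_poly xs x))"
      by (simp add: complex_norm_square[symmetric] algebra_simps del: of_real_power)
    also have "\<dots> = integral {0..1} (\<lambda>x. \<phi> x * cnj (\<phi> x - trig_poly xs x))"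
      using integral_mult_cnj_trig_poly[OF c01 z, of xs]
      by (subst integral_add) (auto intro!: integrable_continuous_interval continuous_intros c01)
    finally have eqI: "complex_of_real I = integral {0..1} (\<lambda>x. \<phi> x * cnj (\<phi> x - trig_poly xs x))" .
    have "norm (integral {0..1} (\<lambda>x. \<phi> x * cnj (\<phi> x - trig_poly xs x))) \<le> M * (e / (M + 1)) * (1 - 0)"
    proof (rule integral_bound)
      fix t :: real assume "t \<in> {0..1}"
      then show "norm (\<phi> t * cnj (\<phi> t - trig_poly xs t)) \<le> M * (e / (M + 1))"
        unfolding norm_mult complex_mod_cnj using M xs by (intro mult_mono) auto
    qed (auto intro!: continuous_intros c01)
    moreover have "M * (e / (M + 1)) \<le> e" using M(1) e by (simp add: field_simps)
    ultimately have "norm (complex_of_real I) \<le> e" unfolding eqI by simp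
    then show "I \<le> 0 + e" by simp
  qed
  moreover have "I \<ge> 0"
    unfolding I_def by (rule integral_nonneg) (auto intro: integrable_continuous_interval cI)
  ultimately show ?thesis unfolding I_def by (metis field_le_epsilon order_antisym)
qed

lemma cfourier_coeff_eq_0_imp_eq_0:
  fixes \<phi> :: "real \<Rightarrow> complex"
  assumes c: "continuous_on UNIV \<phi>" and p: "\<And>x. \<phi> (x + 1) = \<phi> x"
    and z: "\<And>n. cfourier_coeff \<phi> n = 0"
  shows "\<phi> x = 0"
proof -
  have cI: "continuous_on {0..1} (\<lambda>x. (cmod (\<phi> x))\<^sup>2)"
    using c by (intro continuous_intros) (auto intro: continuous_on_subset)
  then have "((\<lambda>x. (cmod (\<phi> x))\<^sup>2) has_integral 0) (cbox 0 1)"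
    using integrable_integral[OF integrable_continuous_interval[OF cI]]
      integral_norm_sq_eq_0_if_cfourier_coeff_eq_0[OF c p z] by simp
  then have zero01: "\<phi> y = 0" if "y \<in> {0..1}" for y
    using has_integral_0_cbox_imp_0[of 0 1 "\<lambda>x. (cmod (\<phi> x))\<^sup>2" y] cI that by simp
  have "periodic1 (\<lambda>x. Re (\<phi> x))" "periodic1 (\<lambda>x. Im (\<phi> x))"
    using p by (auto simp: periodic1_def)
  then have "\<phi> (y + of_int k) = \<phi> y" for y k
    using periodic1_of_int by (auto simp: complex_eq_iff)
  then have "\<phi> x = \<phi> (x - of_int \<lfloor>x\<rfloor>)"
    by (metis diff_add_cancel)
  also have "\<dots> = 0"
    by (rule zero01) (auto simp: of_int_floor_le less_imp_le, linarith)
  finally show ?thesis .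
qed

definition fourier_series :: "(int \<Rightarrow> complex) \<Rightarrow> real \<Rightarrow> complex" where
  "fourier_series c x = (\<Sum>\<^sub>\<infinity>k. c k * e2pi (of_int k * x))"

lemma
  fixes c :: "int \<Rightarrow> complex"
  assumes s: "(\<lambda>k. cmod (c k)) summable_on UNIV"
  shows continuous_on_fourier_series: "continuous_on UNIV (fourier_series c)"
    and fourier_series_periodic: "fourier_series c (x + 1) = fourier_series c x"
    and has_sum_fourier_series: "((\<lambda>k. c k * e2pi (of_int k * x)) has_sum fourier_series c x) UNIV"
    and cfourier_coeff_fourier_series: "cfourier_coeff (fourier_series c) n = c n"
proof -
  have bound: "norm (c k * e2pi (of_int k * x)) \<le> cmod (c k)" for k x
    by (simp add: norm_mult)
  show "continuous_on UNIV (fourier_series c)"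
    unfolding fourier_series_def
    by (rule continuous_on_infsum_dominated[OF s bound]) (auto intro!: continuous_intros)
  have "e2pi (of_int k * (x + 1)) = e2pi (of_int k * x)" for k
    using e2pi_add[of "of_int k * x" "of_int k"] by (simp add: distrib_left)
  then show "fourier_series c (x + 1) = fourier_series c x"
    by (simp add: fourier_series_def)
  show "((\<lambda>k. c k * e2pi (of_int k * x)) has_sum fourier_series c x) UNIV"
    unfolding fourier_series_def
    by (rule has_sum_infsum, rule abs_summable_summable, rule summable_on_comparison_test[OF s])
       (auto simp: bound)
  define u where "u k x = c k * e2pi (of_int k * x) * e2pi (- of_int n * x)" for k x
  have "((\<lambda>k. integral {0..1} (u k)) has_sum integral {0..1} (\<lambda>x. \<Sum>\<^sub>\<infinity>k. u k x)) UNIV"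
    by (rule has_sum_integral_infsum_dominated[OF s]) (auto simp: u_def norm_mult intro!: continuous_intros)
  moreover have "integral {0..1} (u k) = (if k = n then c n else 0)" for k
  proof -
    have "u k = (\<lambda>x. c k * e2pi (of_int (k - n) * x))"
      by (auto simp: u_def fun_eq_iff e2pi_add[symmetric] algebra_simps)
    then show ?thesis
      using integral_e2pi[of "k - n"] by (simp del: of_int_diff add: of_int_diff[symmetric])
  qed
  moreover have "(\<lambda>x. \<Sum>\<^sub>\<infinity>k. u k x) = (\<lambda>x. fourier_series c x * e2pi (- of_int n * x))"
    by (auto simp: u_def fourier_series_def infsum_cmult_left' fun_eq_iff)
  ultimately have "((\<lambda>k. if k = n then c n else 0) has_sum cfourier_coeff (fourier_series c) n) UNIV"
    by (simp add: cfourier_coeff_def)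
  then show "cfourier_coeff (fourier_series c) n = c n"
    using has_sum_delta[of n "c n"] has_sum_unique by blast
qed

lemma fourier_inversion:
  assumes s: "smooth_fun f" and p: "periodic1 f"
  shows "((\<lambda>k. fourier_coeff f k * e2pi (of_int k * x)) has_sum complex_of_real (f x)) UNIV"
proof -
  let ?c = "fourier_coeff f"
  have sc: "(\<lambda>k. cmod (?c k)) summable_on UNIV"
    by (rule summable_on_norm_fourier_coeff[OF s p])
  define \<phi> where "\<phi> x = complex_of_real (f x) - fourier_series ?c x" for x
  have cf: "continuous_on S f" for S
    by (rule continuous_on_smooth_fun[OF s])
  have cF: "continuous_on S (fourier_series ?c)" for S
    using continuous_on_fourier_series[OF sc] by (rule continuous_on_subset) auto
  have "cfourier_coeff \<phi> n = 0" for n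
  proof -
    have "continuous_on {0..1} (\<lambda>x. complex_of_real (f x) * e2pi (- of_int n * x))"
      using cf[of "{0..1}"] by (intro continuous_intros)
    moreover have "continuous_on {0..1} (\<lambda>x. fourier_series ?c x * e2pi (- of_int n * x))"
      using cF[of "{0..1}"] by (intro continuous_intros)
    ultimately have "cfourier_coeff \<phi> n
        = cfourier_coeff (\<lambda>x. complex_of_real (f x)) n - cfourier_coeff (fourier_series ?c) n"
      unfolding cfourier_coeff_def \<phi>_def left_diff_distrib
      by (intro integral_diff integrable_continuous_interval)
    then show ?thesis
      by (simp add: cfourier_coeff_fourier_series[OF sc] fourier_coeff_eq_cfourier_coeff)
  qed
  moreover have "continuous_on UNIV \<phi>"
    unfolding \<phi>_def by (intro continuous_intros cf continuous_on_fourier_series[OF sc])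
  moreover have "\<phi> (x + 1) = \<phi> x" for x
    using p fourier_series_periodic[OF sc] by (simp add: \<phi>_def periodic1_def)
  ultimately have "\<phi> x = 0" by (rule cfourier_coeff_eq_0_imp_eq_0[rotated 2])
  then have "fourier_series ?c x = complex_of_real (f x)" by (simp add: \<phi>_def)
  with has_sum_fourier_series[OF sc, of x] show ?thesis by simp
qed

section \<open>The operator and its symbol\<close>

definition odd_kernel :: "real \<Rightarrow> real \<Rightarrow> real" where
  "odd_kernel \<beta> w = 1 / (w * \<bar>w\<bar> powr \<beta>)"

text \<open>\<open>Hop \<epsilon> s1 s2 \<beta>\<close> maps the pair \<open>e(k\<cdot>), e(l\<cdot>)\<close> to \<open>Hop_symbol \<epsilon> \<beta> (k s1 + l s2) e((k + l)\<cdot>)\<close>;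
  oddness of the kernel folds the integral over \<open>\<epsilon> \<le> \<bar>w\<bar> \<le> 1/2\<close> onto \<open>[\<epsilon>, 1/2]\<close>.\<close>

definition Hop_symbol :: "real \<Rightarrow> real \<Rightarrow> real \<Rightarrow> complex" where
  "Hop_symbol \<epsilon> \<beta> \<xi> =
     integral {\<epsilon>..1/2} (\<lambda>w. complex_of_real (odd_kernel \<beta> w) * (e2pi (\<xi> * w) - e2pi (- \<xi> * w)))"

lemma continuous_on_odd_kernel: "(\<And>w. w \<in> S \<Longrightarrow> w \<noteq> 0) \<Longrightarrow> continuous_on S (odd_kernel \<beta>)"
  unfolding odd_kernel_def by (intro continuous_intros) auto

lemma odd_kernel_minus: "odd_kernel \<beta> (- w) = - odd_kernel \<beta> w"
  by (simp add: odd_kernel_def)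

lemma abs_odd_kernel_le:
  assumes "0 < \<epsilon>" "\<epsilon> \<le> w" "0 \<le> \<beta>"
  shows "\<bar>odd_kernel \<beta> w\<bar> \<le> 1 / (\<epsilon> * \<epsilon> powr \<beta>)"
proof -
  have "\<epsilon> * \<epsilon> powr \<beta> \<le> w * w powr \<beta>" using assms by (intro mult_mono powr_mono2) auto
  then show ?thesis using assms by (simp add: odd_kernel_def frac_le)
qed

lemma norm_odd_kernel_e2pi_diff_le:
  assumes "0 < \<epsilon>" "\<epsilon> \<le> w" "0 \<le> \<beta>"
  shows "norm (complex_of_real (odd_kernel \<beta> w) * (e2pi a - e2pi b)) \<le> 2 / (\<epsilon> * \<epsilon> powr \<beta>)"
proof -
  have "cmod (e2pi a - e2pi b) \<le> 2"
    using norm_triangle_ineq4[of "e2pi a" "e2pi b"] by simp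
  then show ?thesis
    using mult_mono[OF abs_odd_kernel_le[OF assms], of "cmod (e2pi a - e2pi b)" 2] assms
    by (simp add: norm_mult)
qed

lemma norm_Hop_symbol_le:
  assumes "0 < \<epsilon>" "\<epsilon> \<le> 1/2" "0 \<le> \<beta>"
  shows "cmod (Hop_symbol \<epsilon> \<beta> \<xi>) \<le> 2 / (\<epsilon> * \<epsilon> powr \<beta>)"
proof -
  have "cmod (Hop_symbol \<epsilon> \<beta> \<xi>) \<le> 2 / (\<epsilon> * \<epsilon> powr \<beta>) * (1/2 - \<epsilon>)"
    unfolding Hop_symbol_def using assms norm_odd_kernel_e2pi_diff_le
    by (intro integral_bound) (auto intro!: continuous_intros continuous_on_odd_kernel)
  also have "\<dots> \<le> 2 / (\<epsilon> * \<epsilon> powr \<beta>)" using assms by (intro mult_left_le) auto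
  finally show ?thesis .
qed

lemma Hop_eq_integral_odd_kernel:
  assumes e: "0 < \<epsilon>" "\<epsilon> \<le> 1/2" and cf: "continuous_on UNIV f" and cg: "continuous_on UNIV g"
  shows "complex_of_real (Hop \<epsilon> s1 s2 \<beta> f g x) = integral {\<epsilon>..1/2} (\<lambda>w. complex_of_real
           (odd_kernel \<beta> w * (f (x + s1 * w) * g (x + s2 * w) - f (x - s1 * w) * g (x - s2 * w))))"
proof -
  let ?A = "{w. \<epsilon> \<le> \<bar>w\<bar> \<and> \<bar>w\<bar> \<le> 1/2}"
  define G where "G = (\<lambda>w. f (x + s1 * w) * g (x + s2 * w) * odd_kernel \<beta> w)"
  have "continuous_on ?A G"
    unfolding G_def using e
    by (intro continuous_intros continuous_on_odd_kernel continuous_on_compose2[OF cf]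
        continuous_on_compose2[OF cg]) auto
  then have "(G has_integral integral {\<epsilon>..1/2} (\<lambda>w. G w + G (-w))) ?A"
    using e by (intro has_integral_symmetric_shell) auto
  moreover have "Hop \<epsilon> s1 s2 \<beta> f g x = integral ?A G"
    by (simp add: Hop_def G_def odd_kernel_def)
  moreover have "G w + G (-w) = odd_kernel \<beta> w * (f (x + s1 * w) * g (x + s2 * w) - f (x - s1 * w) * g (x - s2 * w))" for w
    by (simp add: G_def odd_kernel_minus algebra_simps)
  ultimately have "Hop \<epsilon> s1 s2 \<beta> f g x = integral {\<epsilon>..1/2} (\<lambda>w.
      odd_kernel \<beta> w * (f (x + s1 * w) * g (x + s2 * w) - f (x - s1 * w) * g (x - s2 * w)))"
    by (simp add: integral_unique)
  moreover have "(\<lambda>w. odd_kernel \<beta> w * (f (x + s1 * w) * g (x + s2 * w) - f (x - s1 * w) * g (x - s2 * w)))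
      integrable_on {\<epsilon>..1/2}"
    using e by (intro integrable_continuous_interval continuous_intros continuous_on_odd_kernel
        continuous_on_compose2[OF cf] continuous_on_compose2[OF cg]) auto
  ultimately show ?thesis
    by (simp only: integral_linear[OF _ bounded_linear_of_real[where 'a=complex], unfolded o_def])
qed

lemma has_sum_fourier_product:
  assumes sf: "smooth_fun f" and pf: "periodic1 f" and sg: "smooth_fun g" and pg: "periodic1 g"
  shows "((\<lambda>(k,l). fourier_coeff f k * fourier_coeff g l * e2pi (of_int k * y1 + of_int l * y2))
          has_sum complex_of_real (f y1 * g y2)) UNIV"
  using has_sum_product[OF _ _ fourier_inversion[OF sf pf] fourier_inversion[OF sg pg]]
    summable_on_norm_fourier_coeff[OF sf pf] summable_on_norm_fourier_coeff[OF sg pg]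
  by (simp add: norm_mult e2pi_add mult_ac case_prod_unfold)

lemma has_sum_fourier_product_shifted:
  assumes "smooth_fun f" "periodic1 f" "smooth_fun g" "periodic1 g"
  shows "((\<lambda>(k,l). fourier_coeff f k * fourier_coeff g l * e2pi (of_int (k + l) * x)
            * e2pi ((of_int k * s1 + of_int l * s2) * t))
          has_sum complex_of_real (f (x + s1 * t) * g (x + s2 * t))) UNIV"
proof -
  have "of_int k * (x + s1 * t) + of_int l * (x + s2 * t) = of_int (k + l) * x + (of_int k * s1 + of_int l * s2) * t"
    for k l :: int by (simp add: algebra_simps)
  then show ?thesis
    using has_sum_fourier_product[OF assms, of "x + s1 * t" "x + s2 * t"] by (simp add: e2pi_add mult.assoc)
qed

lemma has_sum_Hop:
  assumes e: "0 < \<epsilon>" "\<epsilon> \<le> 1/2" and b: "0 \<le> \<beta>"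
    and sf: "smooth_fun f" and pf: "periodic1 f" and sg: "smooth_fun g" and pg: "periodic1 g"
  shows "((\<lambda>(k,l). fourier_coeff f k * fourier_coeff g l * e2pi (of_int (k + l) * x)
            * Hop_symbol \<epsilon> \<beta> (of_int k * s1 + of_int l * s2))
          has_sum complex_of_real (Hop \<epsilon> s1 s2 \<beta> f g x)) UNIV"
proof -
  let ?a = "fourier_coeff f" and ?b = "fourier_coeff g"
  define u where "u = (\<lambda>(k,l) w. ?a k * ?b l * e2pi (of_int (k + l) * x) *
      (complex_of_real (odd_kernel \<beta> w) * (e2pi ((of_int k * s1 + of_int l * s2) * w)
         - e2pi (- (of_int k * s1 + of_int l * s2) * w))))"
  have "((\<lambda>kl. u kl w) has_sum complex_of_real (odd_kernel \<beta> w) *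
          (complex_of_real (f (x + s1 * w) * g (x + s2 * w)) - complex_of_real (f (x + s1 * - w) * g (x + s2 * - w))))
        UNIV" for w
    using has_sum_cmult_right[OF has_sum_diff[OF has_sum_fourier_product_shifted[OF sf pf sg pg, of x s1 s2 w]
          has_sum_fourier_product_shifted[OF sf pf sg pg, of x s1 s2 "- w"]],
          where c = "complex_of_real (odd_kernel \<beta> w)"]
    by (simp add: u_def case_prod_unfold algebra_simps)
  then have "(\<lambda>w. \<Sum>\<^sub>\<infinity>kl. u kl w) = (\<lambda>w. complex_of_real
           (odd_kernel \<beta> w * (f (x + s1 * w) * g (x + s2 * w) - f (x - s1 * w) * g (x - s2 * w))))"
    by (auto simp: fun_eq_iff infsumI)
  then have "integral {\<epsilon>..1/2} (\<lambda>w. \<Sum>\<^sub>\<infinity>kl. u kl w) = complex_of_real (Hop \<epsilon> s1 s2 \<beta> f g x)"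
    using Hop_eq_integral_odd_kernel[OF e continuous_on_smooth_fun[OF sf] continuous_on_smooth_fun[OF sg]]
    by simp
  moreover have "((\<lambda>kl. integral {\<epsilon>..1/2} (u kl)) has_sum integral {\<epsilon>..1/2} (\<lambda>w. \<Sum>\<^sub>\<infinity>kl. u kl w)) UNIV"
  proof (rule has_sum_integral_infsum_dominated)
    show "(\<lambda>(k,l). 2 / (\<epsilon> * \<epsilon> powr \<beta>) * (cmod (?a k) * cmod (?b l))) summable_on UNIV"
      using summable_on_cmult_right[OF summable_on_norm_product[OF summable_on_norm_fourier_coeff[OF sf pf]
            summable_on_norm_fourier_coeff[OF sg pg]], where c = "2 / (\<epsilon> * \<epsilon> powr \<beta>)"]
      by (simp add: case_prod_unfold)
    show "norm (u kl w) \<le> (case kl of (k,l) \<Rightarrow> 2 / (\<epsilon> * \<epsilon> powr \<beta>) * (cmod (?a k) * cmod (?b l)))"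
      if "w \<in> {\<epsilon>..1/2}" for kl w
      using that e b mult_left_mono[OF norm_odd_kernel_e2pi_diff_le, of \<epsilon> w \<beta>
          "cmod (?a (fst kl)) * cmod (?b (snd kl))"]
      by (auto simp: u_def case_prod_unfold norm_mult mult_ac)
    show "continuous_on {\<epsilon>..1/2} (u kl)" for kl
      using e by (auto simp: u_def case_prod_unfold intro!: continuous_intros continuous_on_odd_kernel)
  qed
  moreover have "integral {\<epsilon>..1/2} (u kl) = (case kl of (k,l) \<Rightarrow> ?a k * ?b l * e2pi (of_int (k + l) * x)
                   * Hop_symbol \<epsilon> \<beta> (of_int k * s1 + of_int l * s2))" for kl
    by (auto simp: u_def Hop_symbol_def case_prod_unfold integral_mult_right)
  ultimately show ?thesis by (simp add: case_prod_unfold)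
qed

lemma cfourier_coeff_double_series:
  fixes c :: "int \<times> int \<Rightarrow> complex"
  assumes sc: "(\<lambda>kl. norm (c kl)) summable_on UNIV"
    and \<phi>: "\<And>x. ((\<lambda>(k,l). c (k,l) * e2pi (of_int (k + l) * x)) has_sum \<phi> x) UNIV"
  shows "((\<lambda>k. c (k, n - k)) has_sum cfourier_coeff \<phi> n) UNIV"
proof -
  define v where "v = (\<lambda>(k,l) x. c (k,l) * e2pi (of_int (k + l - n) * x))"
  have "(\<lambda>x. \<Sum>\<^sub>\<infinity>kl. v kl x) = (\<lambda>x. \<phi> x * e2pi (- of_int n * x))"
  proof
    fix x
    have "v kl x = c kl * e2pi (of_int (fst kl + snd kl) * x) * e2pi (- of_int n * x)" for kl
      by (simp add: v_def case_prod_unfold e2pi_add[symmetric] algebra_simps)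
    then show "(\<Sum>\<^sub>\<infinity>kl. v kl x) = \<phi> x * e2pi (- of_int n * x)"
      using infsumI[OF has_sum_cmult_left[OF \<phi>[of x], of "e2pi (- of_int n * x)"]]
      by (simp add: case_prod_unfold)
  qed
  moreover have "((\<lambda>kl. integral {0..1} (v kl)) has_sum integral {0..1} (\<lambda>x. \<Sum>\<^sub>\<infinity>kl. v kl x)) UNIV"
    using sc by (rule has_sum_integral_infsum_dominated)
      (auto simp: v_def case_prod_unfold norm_mult intro!: continuous_intros)
  moreover have "integral {0..1} (v kl) = (if fst kl + snd kl = n then c kl else 0)" for kl
    using integral_e2pi[of "fst kl + snd kl - n"]
    by (simp add: v_def case_prod_unfold integral_mult_right del: of_int_diff of_int_add)
  ultimately have "((\<lambda>kl. if fst kl + snd kl = n then c kl else 0) has_sum cfourier_coeff \<phi> n) UNIV"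
    by (simp add: cfourier_coeff_def)
  then have "((\<lambda>kl. if fst kl + snd kl = n then c kl else 0) has_sum cfourier_coeff \<phi> n) (range (\<lambda>k. (k, n - k)))"
    by (rule has_sum_cong_neutral[THEN iffD1, rotated -1]) auto
  then show ?thesis
    by (subst (asm) has_sum_reindex) (auto simp: inj_on_def o_def)
qed

lemma fourier_coeff_Hop:
  assumes e: "0 < \<epsilon>" "\<epsilon> \<le> 1/2" and b: "0 \<le> \<beta>"
    and sf: "smooth_fun f" and pf: "periodic1 f" and sg: "smooth_fun g" and pg: "periodic1 g"
  shows "((\<lambda>k. fourier_coeff f k * fourier_coeff g (n - k) * Hop_symbol \<epsilon> \<beta> (of_int k * s1 + of_int (n - k) * s2))
          has_sum fourier_coeff (Hop \<epsilon> s1 s2 \<beta> f g) n) UNIV"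
proof -
  let ?c = "\<lambda>(k,l). fourier_coeff f k * fourier_coeff g l * Hop_symbol \<epsilon> \<beta> (of_int k * s1 + of_int l * s2)"
  have "(\<lambda>kl. norm (?c kl)) summable_on UNIV"
  proof (rule summable_on_comparison_test)
    show "(\<lambda>(k,l). 2 / (\<epsilon> * \<epsilon> powr \<beta>) * (cmod (fourier_coeff f k) * cmod (fourier_coeff g l))) summable_on UNIV"
      using summable_on_cmult_right[OF summable_on_norm_product[OF summable_on_norm_fourier_coeff[OF sf pf]
            summable_on_norm_fourier_coeff[OF sg pg]], where c = "2 / (\<epsilon> * \<epsilon> powr \<beta>)"]
      by (simp add: case_prod_unfold)
    show "norm (?c kl) \<le> (case kl of (k,l) \<Rightarrow> 2 / (\<epsilon> * \<epsilon> powr \<beta>) * (cmod (fourier_coeff f k) * cmod (fourier_coeff g l)))" for kl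
      using mult_left_mono[OF norm_Hop_symbol_le[OF e b, of "of_int (fst kl) * s1 + of_int (snd kl) * s2"],
          where c = "cmod (fourier_coeff f (fst kl)) * cmod (fourier_coeff g (snd kl))"]
      by (auto simp: case_prod_unfold norm_mult mult_ac)
  qed auto
  moreover have "((\<lambda>(k,l). ?c (k,l) * e2pi (of_int (k + l) * x)) has_sum complex_of_real (Hop \<epsilon> s1 s2 \<beta> f g x)) UNIV" for x
    using has_sum_Hop[OF e b sf pf sg pg, of x s1 s2] by (simp add: case_prod_unfold mult_ac)
  ultimately show ?thesis
    using cfourier_coeff_double_series[of ?c] by (simp add: fourier_coeff_eq_cfourier_coeff)
qed

lemma norm_Hop_symbol_integrand:
  assumes "w > 0"
  shows "cmod (complex_of_real (odd_kernel \<beta> w) * (e2pi (\<xi> * w) - e2pi (- \<xi> * w)))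
           = 2 * w powr (-1 - \<beta>) * \<bar>sin (2 * pi * (\<xi> * w))\<bar>"
proof -
  have "w powr (-1 - \<beta>) = inverse (w * w powr \<beta>)"
    using assms powr_minus[of w "1 + \<beta>"] by (simp add: powr_add)
  then have "odd_kernel \<beta> w = w powr (-1 - \<beta>)"
    using assms by (simp add: odd_kernel_def divide_inverse)
  then show ?thesis
    using norm_e2pi_diff_e2pi_minus[of "\<xi> * w"] by (simp add: norm_mult)
qed

text \<open>The integrand of the symbol is bounded by \<open>2 w\<^sup>-\<^sup>1\<^sup>-\<^sup>\<beta>\<close> and by \<open>2 a w\<^sup>-\<^sup>\<beta>\<close> with
  \<open>a = 2\<pi>\<bar>\<xi>\<bar>\<close>. The second bound is integrated up to the split point \<open>t\<close>, the first beyond it;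
  \<open>t\<close> is the crossover point \<open>1/a\<close> clipped to \<open>[\<epsilon>, 1/2]\<close>.\<close>

lemma Hop_symbol_split_estimate:
  fixes \<epsilon> t a \<beta> :: real
  assumes e: "0 < \<epsilon>" "\<epsilon> \<le> t" "t \<le> 1/2" and a: "a > 0" and b: "0 < \<beta>" "\<beta> < 1"
    and t_lo: "t = \<epsilon> \<or> t \<le> 1/a" and t_hi: "t = 1/2 \<or> 1/a \<le> t"
  shows "2 * a * ((t powr (1 - \<beta>) - \<epsilon> powr (1 - \<beta>)) / (1 - \<beta>))
           + 2 * ((t powr (- \<beta>) - (1/2) powr (- \<beta>)) / \<beta>)
         \<le> 2 * a powr \<beta> * (1 / (1 - \<beta>) + 1 / \<beta>)"
proof -
  have c1: "a * (t powr (1 - \<beta>) - \<epsilon> powr (1 - \<beta>)) \<le> a powr \<beta>"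
  proof (cases "t = \<epsilon>")
    case False
    then have "a * t powr (1 - \<beta>) \<le> a * (1/a) powr (1 - \<beta>)"
      using t_lo e b a by (intro mult_left_mono powr_mono2) auto
    also have "a * (1/a) powr (1 - \<beta>) = a powr \<beta>"
      using a by (simp add: powr_divide powr_diff)
    finally have "a * t powr (1 - \<beta>) \<le> a powr \<beta>" .
    moreover have "0 \<le> a * \<epsilon> powr (1 - \<beta>)" using a by simp
    ultimately show ?thesis by (simp add: right_diff_distrib)
  qed simp
  have c2: "t powr (- \<beta>) - (1/2) powr (- \<beta>) \<le> a powr \<beta>"
  proof (cases "t = 1/2")
    case True
    show ?thesis unfolding True by simp
  next
    case False
    then have "t powr (- \<beta>) \<le> (1/a) powr (- \<beta>)"
      using t_hi a b by (intro powr_mono2') auto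
    also have "(1/a) powr (- \<beta>) = a powr \<beta>"
      using a by (simp add: powr_divide powr_minus)
    finally show ?thesis using powr_ge_zero[of "1/2" "- \<beta>"] by linarith
  qed
  have "2 * a * ((t powr (1 - \<beta>) - \<epsilon> powr (1 - \<beta>)) / (1 - \<beta>)) + 2 * ((t powr (- \<beta>) - (1/2) powr (- \<beta>)) / \<beta>)
      = 2 * (a * (t powr (1 - \<beta>) - \<epsilon> powr (1 - \<beta>))) / (1 - \<beta>) + 2 * (t powr (- \<beta>) - (1/2) powr (- \<beta>)) / \<beta>"
    by (simp add: field_simps)
  also have "\<dots> \<le> 2 * a powr \<beta> / (1 - \<beta>) + 2 * a powr \<beta> / \<beta>"
    using c1 c2 b by (intro add_mono divide_right_mono mult_left_mono) auto
  finally show ?thesis by (simp add: field_simps)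
qed

definition Hop_symbol_const :: "real \<Rightarrow> real" where
  "Hop_symbol_const \<beta> = 2 * (2 * pi) powr \<beta> * (1 / (1 - \<beta>) + 1 / \<beta>)"

lemma Hop_symbol_const_nonneg: "0 < \<beta> \<Longrightarrow> \<beta> < 1 \<Longrightarrow> Hop_symbol_const \<beta> \<ge> 0"
  by (simp add: Hop_symbol_const_def)

lemma norm_Hop_symbol_le_powr:
  assumes e: "0 < \<epsilon>" "\<epsilon> \<le> 1/2" and b: "0 < \<beta>" "\<beta> < 1"
  shows "cmod (Hop_symbol \<epsilon> \<beta> \<xi>) \<le> Hop_symbol_const \<beta> * \<bar>\<xi>\<bar> powr \<beta>"
proof (cases "\<xi> = 0")
  case False
  define a where "a = 2 * pi * \<bar>\<xi>\<bar>"
  have a: "a > 0" using False by (simp add: a_def)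
  define t where "t = max \<epsilon> (min (1/a) (1/2))"
  have t: "\<epsilon> \<le> t" "t \<le> 1/2" using e by (auto simp: t_def)
  define F where "F w = complex_of_real (odd_kernel \<beta> w) * (e2pi (\<xi> * w) - e2pi (- \<xi> * w))" for w
  have cF: "continuous_on {\<epsilon>..1/2} F"
    unfolding F_def using e by (intro continuous_intros continuous_on_odd_kernel) auto
  have "Hop_symbol \<epsilon> \<beta> \<xi> = integral {\<epsilon>..t} F + integral {t..1/2} F"
    unfolding Hop_symbol_def F_def[symmetric]
    using Henstock_Kurzweil_Integration.integral_combine[of \<epsilon> t "1/2" F] t
      integrable_continuous_interval[OF cF] by simp
  moreover have "cmod (integral {\<epsilon>..t} F) \<le> 2 * a * ((t powr (1 - \<beta>) - \<epsilon> powr (1 - \<beta>)) / (1 - \<beta>))"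
  proof -
    have "cmod (F w) \<le> 2 * a * w powr (- \<beta>)" if "w \<in> {\<epsilon>..t}" for w
    proof -
      have w: "w > 0" using that e by auto
      have "cmod (F w) \<le> 2 * w powr (-1 - \<beta>) * (a * w)"
        unfolding F_def norm_Hop_symbol_integrand[OF w]
        using abs_sin_x_le_abs_x[of "2 * pi * (\<xi> * w)"] w by (intro mult_left_mono) (auto simp: a_def abs_mult)
      also have "\<dots> = 2 * a * (w powr (-1 - \<beta>) * w powr 1)" using w by simp
      also have "w powr (-1 - \<beta>) * w powr 1 = w powr (-1 - \<beta> + 1)" by (rule powr_add[symmetric])
      finally show ?thesis by simp
    qed
    then have "cmod (integral {\<epsilon>..t} F) \<le> 2 * a * ((t powr (- \<beta> + 1) - \<epsilon> powr (- \<beta> + 1)) / (- \<beta> + 1))"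
      using e t b continuous_on_subset[OF cF] by (intro norm_integral_le_powr) auto
    then show ?thesis by (simp add: add.commute)
  qed
  moreover have "cmod (integral {t..1/2} F) \<le> 2 * ((t powr (- \<beta>) - (1/2) powr (- \<beta>)) / \<beta>)"
  proof -
    have "cmod (F w) \<le> 2 * w powr (-1 - \<beta>)" if "w \<in> {t..1/2}" for w
      using that e t norm_Hop_symbol_integrand[of w \<beta> \<xi>] abs_sin_le_one[of "2 * pi * (\<xi> * w)"]
      by (auto simp: F_def mult_left_le)
    then have "cmod (integral {t..1/2} F) \<le> 2 * (((1/2) powr (-1 - \<beta> + 1) - t powr (-1 - \<beta> + 1)) / (-1 - \<beta> + 1))"
      using e t b continuous_on_subset[OF cF] by (intro norm_integral_le_powr) auto
    then show ?thesis using b by (simp add: field_simps)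
  qed
  ultimately have "cmod (Hop_symbol \<epsilon> \<beta> \<xi>)
      \<le> 2 * a * ((t powr (1 - \<beta>) - \<epsilon> powr (1 - \<beta>)) / (1 - \<beta>)) + 2 * ((t powr (- \<beta>) - (1/2) powr (- \<beta>)) / \<beta>)"
    using norm_triangle_ineq[of "integral {\<epsilon>..t} F" "integral {t..1/2} F"] by simp
  also have "\<dots> \<le> 2 * a powr \<beta> * (1 / (1 - \<beta>) + 1 / \<beta>)"
    using e t a b by (intro Hop_symbol_split_estimate) (auto simp: t_def)
  also have "\<dots> = Hop_symbol_const \<beta> * \<bar>\<xi>\<bar> powr \<beta>"
    by (simp add: Hop_symbol_const_def a_def powr_mult)
  finally show ?thesis .
qed (simp add: Hop_symbol_def)

section \<open>Weighted convolution estimates\<close>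

lemma sobolev_weight_add_le:
  fixes m \<beta> :: real and k l :: int
  assumes m: "m \<ge> 0" and b: "\<beta> \<ge> 0"
  shows "sobolev_weight (m/2) (k + l) * (\<bar>of_int k\<bar> + \<bar>of_int l\<bar>) powr \<beta>
         \<le> 2 powr (m + \<beta>) * (sobolev_weight ((m + \<beta>)/2) k + sobolev_weight ((m + \<beta>)/2) l)"
proof -
  define x where "x = real_of_int k"
  define y where "y = real_of_int l"
  define M where "M = max (1 + x\<^sup>2) (1 + y\<^sup>2)"
  have Mx: "1 + x\<^sup>2 \<le> M" and My: "1 + y\<^sup>2 \<le> M" by (auto simp: M_def)
  then have M1: "M \<ge> 1" by (smt (verit) zero_le_power2)
  have "(x + y)\<^sup>2 \<le> 2 * x\<^sup>2 + 2 * y\<^sup>2"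
    using zero_le_power2[of "x - y"] by (simp add: power2_diff power2_sum)
  then have "1 + (x + y)\<^sup>2 \<le> 4 * M" using Mx My by linarith
  then have w1: "sobolev_weight (m/2) (k + l) \<le> (4 * M) powr (m/2)"
    unfolding sobolev_weight_def x_def y_def using m by (intro powr_mono2) auto
  have "(\<bar>x\<bar> + \<bar>y\<bar>)\<^sup>2 \<le> 2 * x\<^sup>2 + 2 * y\<^sup>2"
    using zero_le_power2[of "\<bar>x\<bar> - \<bar>y\<bar>"] by (simp add: power2_diff power2_sum)
  then have "(\<bar>x\<bar> + \<bar>y\<bar>)\<^sup>2 \<le> 4 * M" using Mx My by linarith
  then have "((\<bar>x\<bar> + \<bar>y\<bar>)\<^sup>2) powr (\<beta>/2) \<le> (4 * M) powr (\<beta>/2)"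
    using b by (intro powr_mono2) auto
  moreover have "((\<bar>x\<bar> + \<bar>y\<bar>)\<^sup>2) powr (\<beta>/2) = (\<bar>x\<bar> + \<bar>y\<bar>) powr \<beta>"
  proof (cases "\<bar>x\<bar> + \<bar>y\<bar> = 0")
    case False
    then have "(\<bar>x\<bar> + \<bar>y\<bar>)\<^sup>2 = (\<bar>x\<bar> + \<bar>y\<bar>) powr 2"
      using powr_realpow[of "\<bar>x\<bar> + \<bar>y\<bar>" 2] by simp
    then show ?thesis by (simp only: powr_powr) simp
  qed (simp add: add_nonneg_eq_0_iff)
  ultimately have w2: "(\<bar>of_int k\<bar> + \<bar>of_int l\<bar>) powr \<beta> \<le> (4 * M) powr (\<beta>/2)"
    by (simp add: x_def y_def)
  have "sobolev_weight (m/2) (k + l) * (\<bar>of_int k\<bar> + \<bar>of_int l\<bar>) powr \<beta> \<le> (4 * M) powr (m/2) * (4 * M) powr (\<beta>/2)"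
    by (intro mult_mono w1 w2) auto
  also have "\<dots> = 4 powr ((m + \<beta>)/2) * M powr ((m + \<beta>)/2)"
    using M1 by (simp add: powr_mult add_divide_distrib powr_add)
  also have "4 powr ((m + \<beta>)/2) = 2 powr (m + \<beta>)"
    using powr_powr[of 2 2 "(m + \<beta>)/2"] by simp
  also have "M powr ((m + \<beta>)/2) \<le> sobolev_weight ((m + \<beta>)/2) k + sobolev_weight ((m + \<beta>)/2) l"
    by (auto simp: M_def sobolev_weight_def x_def y_def max_def)
  finally show ?thesis by (simp add: mult_left_mono)
qed

definition seq_conv :: "(int \<Rightarrow> real) \<Rightarrow> (int \<Rightarrow> real) \<Rightarrow> int \<Rightarrow> real" where
  "seq_conv a b n = (\<Sum>\<^sub>\<infinity>k. a k * b (n - k))"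

lemma bij_betw_int_reflect: "bij_betw (\<lambda>k::int. n - k) UNIV UNIV"
  by (rule bij_betwI[where g = "\<lambda>k. n - k"]) auto

lemma seq_conv_commute: "seq_conv a b n = seq_conv b a n"
  unfolding seq_conv_def
  using infsum_reindex_bij_betw[OF bij_betw_int_reflect[of n], of "\<lambda>k. a k * b (n - k)"]
  by (simp add: mult.commute)

lemma
  fixes A \<gamma> :: "int \<Rightarrow> real"
  assumes A0: "\<And>k. A k \<ge> 0" and g0: "\<And>k. \<gamma> k \<ge> 0"
    and sA: "(\<lambda>k. (A k)\<^sup>2) summable_on UNIV" and sg: "\<gamma> summable_on UNIV"
  shows summable_on_sq_mult_reflect: "(\<lambda>k. (A k)\<^sup>2 * \<gamma> (n - k)) summable_on UNIV"
    and summable_on_seq_conv: "(\<lambda>k. A k * \<gamma> (n - k)) summable_on UNIV"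
    and seq_conv_sq_le: "(seq_conv A \<gamma> n)\<^sup>2 \<le> (\<Sum>\<^sub>\<infinity>k. \<gamma> k) * (\<Sum>\<^sub>\<infinity>k. (A k)\<^sup>2 * \<gamma> (n - k))"
proof -
  have sg': "(\<lambda>k. \<gamma> (n - k)) summable_on UNIV"
    using summable_on_reindex_bij_betw[OF bij_betw_int_reflect[of n], of \<gamma>] sg by simp
  have "\<gamma> j \<le> (\<Sum>\<^sub>\<infinity>k. \<gamma> k)" for j
    using finite_sum_le_infsum[OF sg, of "{j}"] g0 by simp
  then show s1: "(\<lambda>k. (A k)\<^sup>2 * \<gamma> (n - k)) summable_on UNIV"
    using g0 by (intro summable_on_comparison_test[OF summable_on_cmult_left[OF sA]] mult_left_mono) auto
  define x where "x k = A k * sqrt (\<gamma> (n - k))" for k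
  define y where "y k = sqrt (\<gamma> (n - k))" for k
  have x2: "(x k)\<^sup>2 = (A k)\<^sup>2 * \<gamma> (n - k)" for k by (simp add: x_def power_mult_distrib g0)
  have y2: "(y k)\<^sup>2 = \<gamma> (n - k)" for k by (simp add: y_def g0)
  have xy: "\<bar>x k\<bar> * \<bar>y k\<bar> = A k * \<gamma> (n - k)" for k by (simp add: x_def y_def A0 g0 abs_mult mult.assoc)
  note CS = Cauchy_Schwarz_infsum[of x UNIV y, unfolded xy x2 y2, OF s1 sg']
  show "(\<lambda>k. A k * \<gamma> (n - k)) summable_on UNIV" by (rule CS(1))
  have "(seq_conv A \<gamma> n)\<^sup>2 \<le> (sqrt (\<Sum>\<^sub>\<infinity>k. (A k)\<^sup>2 * \<gamma> (n - k)) * sqrt (\<Sum>\<^sub>\<infinity>k. \<gamma> (n - k)))\<^sup>2"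
    unfolding seq_conv_def using CS(2) by (intro power_mono) (auto intro!: infsum_nonneg simp: A0 g0)
  also have "\<dots> = (\<Sum>\<^sub>\<infinity>k. (A k)\<^sup>2 * \<gamma> (n - k)) * (\<Sum>\<^sub>\<infinity>k. \<gamma> (n - k))"
    by (simp add: power_mult_distrib infsum_nonneg g0)
  also have "(\<Sum>\<^sub>\<infinity>k. \<gamma> (n - k)) = (\<Sum>\<^sub>\<infinity>k. \<gamma> k)"
    using infsum_reindex_bij_betw[OF bij_betw_int_reflect[of n], of \<gamma>] by simp
  finally show "(seq_conv A \<gamma> n)\<^sup>2 \<le> (\<Sum>\<^sub>\<infinity>k. \<gamma> k) * (\<Sum>\<^sub>\<infinity>k. (A k)\<^sup>2 * \<gamma> (n - k))"
    by (simp add: mult.commute)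
qed

lemma
  fixes A \<gamma> :: "int \<Rightarrow> real"
  assumes A0: "\<And>k. A k \<ge> 0" and g0: "\<And>k. \<gamma> k \<ge> 0"
    and sA: "(\<lambda>k. (A k)\<^sup>2) summable_on UNIV" and sg: "\<gamma> summable_on UNIV"
  shows summable_on_seq_conv_sq: "(\<lambda>n. (seq_conv A \<gamma> n)\<^sup>2) summable_on UNIV"
    and Young_seq_conv: "(\<Sum>\<^sub>\<infinity>n. (seq_conv A \<gamma> n)\<^sup>2) \<le> (\<Sum>\<^sub>\<infinity>k. \<gamma> k)\<^sup>2 * (\<Sum>\<^sub>\<infinity>k. (A k)\<^sup>2)"
proof -
  define G where "G = (\<Sum>\<^sub>\<infinity>k. \<gamma> k)"
  have G0: "G \<ge> 0" unfolding G_def by (rule infsum_nonneg) (simp add: g0)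
  note s1 = summable_on_sq_mult_reflect[OF A0 g0 sA sg]
  have fin: "(\<Sum>n\<in>N. (seq_conv A \<gamma> n)\<^sup>2) \<le> G\<^sup>2 * (\<Sum>\<^sub>\<infinity>k. (A k)\<^sup>2)" if N: "finite N" for N
  proof -
    have hs: "((\<lambda>k. \<Sum>n\<in>N. (A k)\<^sup>2 * \<gamma> (n - k)) has_sum (\<Sum>n\<in>N. \<Sum>\<^sub>\<infinity>k. (A k)\<^sup>2 * \<gamma> (n - k))) UNIV"
      using N by (rule has_sum_sum) (use s1 in auto)
    have "(\<Sum>n\<in>N. (seq_conv A \<gamma> n)\<^sup>2) \<le> (\<Sum>n\<in>N. G * (\<Sum>\<^sub>\<infinity>k. (A k)\<^sup>2 * \<gamma> (n - k)))"
      by (intro sum_mono) (simp add: G_def seq_conv_sq_le[OF A0 g0 sA sg])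
    also have "\<dots> = G * (\<Sum>\<^sub>\<infinity>k. \<Sum>n\<in>N. (A k)\<^sup>2 * \<gamma> (n - k))"
      using infsumI[OF hs] by (simp add: sum_distrib_left)
    also have "\<dots> \<le> G * (\<Sum>\<^sub>\<infinity>k. (A k)\<^sup>2 * G)"
    proof (intro mult_left_mono infsum_mono G0)
      show "(\<lambda>k. \<Sum>n\<in>N. (A k)\<^sup>2 * \<gamma> (n - k)) summable_on UNIV"
        using hs by (auto simp: summable_on_def)
      show "(\<lambda>k. (A k)\<^sup>2 * G) summable_on UNIV" by (rule summable_on_cmult_left[OF sA])
      fix k
      have "(\<Sum>n\<in>N. \<gamma> (n - k)) = (\<Sum>j\<in>(\<lambda>n. n - k) ` N. \<gamma> j)"
        by (subst sum.reindex) (auto simp: inj_on_def)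
      also have "\<dots> \<le> G" unfolding G_def by (rule finite_sum_le_infsum[OF sg]) (use N g0 in auto)
      finally show "(\<Sum>n\<in>N. (A k)\<^sup>2 * \<gamma> (n - k)) \<le> (A k)\<^sup>2 * G"
        by (simp add: mult_left_mono flip: sum_distrib_left)
    qed
    also have "\<dots> = G\<^sup>2 * (\<Sum>\<^sub>\<infinity>k. (A k)\<^sup>2)"
      by (simp add: infsum_cmult_left' power2_eq_square)
    finally show ?thesis .
  qed
  show s: "(\<lambda>n. (seq_conv A \<gamma> n)\<^sup>2) summable_on UNIV"
    by (rule nonneg_bdd_above_summable_on) (auto intro!: bdd_aboveI2 fin)
  show "(\<Sum>\<^sub>\<infinity>n. (seq_conv A \<gamma> n)\<^sup>2) \<le> (\<Sum>\<^sub>\<infinity>k. \<gamma> k)\<^sup>2 * (\<Sum>\<^sub>\<infinity>k. (A k)\<^sup>2)"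
    using infsum_le_finite_sums[OF s fin] by (simp add: G_def)
qed

lemma weighted_Hop_symbol_le:
  assumes m: "m \<ge> 0" and b: "0 < \<beta>" "\<beta> < 1" and e: "0 < \<epsilon>" "\<epsilon> \<le> 1/2"
    and s12: "s1 \<in> {0..1}" "s2 \<in> {0..1}"
  shows "sobolev_weight (m/2) n * cmod (Hop_symbol \<epsilon> \<beta> (of_int k * s1 + of_int (n - k) * s2))
         \<le> Hop_symbol_const \<beta> * 2 powr (m + \<beta>)
             * (sobolev_weight ((m + \<beta>)/2) k + sobolev_weight ((m + \<beta>)/2) (n - k))"
proof -
  have "\<bar>of_int k * s1 + of_int (n - k) * s2\<bar> \<le> \<bar>of_int k\<bar> + \<bar>of_int (n - k)\<bar>"
    using s12 abs_triangle_ineq[of "of_int k * s1" "of_int (n - k) * s2"]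
      mult_left_le[of s1 "\<bar>of_int k\<bar>"] mult_left_le[of s2 "\<bar>of_int (n - k)\<bar>"]
    by (auto simp: abs_mult)
  then have "\<bar>of_int k * s1 + of_int (n - k) * s2\<bar> powr \<beta> \<le> (\<bar>of_int k\<bar> + \<bar>of_int (n - k)\<bar>) powr \<beta>"
    using b by (intro powr_mono2) auto
  then have "cmod (Hop_symbol \<epsilon> \<beta> (of_int k * s1 + of_int (n - k) * s2))
      \<le> Hop_symbol_const \<beta> * (\<bar>of_int k\<bar> + \<bar>of_int (n - k)\<bar>) powr \<beta>"
    using norm_Hop_symbol_le_powr[OF e b] mult_left_mono[OF _ Hop_symbol_const_nonneg[OF b]] order_trans
    by blast
  then have "sobolev_weight (m/2) n * cmod (Hop_symbol \<epsilon> \<beta> (of_int k * s1 + of_int (n - k) * s2))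
      \<le> Hop_symbol_const \<beta> * (sobolev_weight (m/2) (k + (n - k)) * (\<bar>of_int k\<bar> + \<bar>of_int (n - k)\<bar>) powr \<beta>)"
    by (simp add: mult_left_mono mult.left_commute)
  also have "\<dots> \<le> Hop_symbol_const \<beta> * (2 powr (m + \<beta>)
      * (sobolev_weight ((m + \<beta>)/2) k + sobolev_weight ((m + \<beta>)/2) (n - k)))"
    using m b Hop_symbol_const_nonneg[OF b] by (intro mult_left_mono sobolev_weight_add_le) auto
  finally show ?thesis by (simp add: mult.assoc)
qed

lemma weighted_fourier_coeff_Hop_le:
  assumes m: "m \<ge> 0" and b: "0 < \<beta>" "\<beta> < 1" and e: "0 < \<epsilon>" "\<epsilon> \<le> 1/2"
    and s12: "s1 \<in> {0..1}" "s2 \<in> {0..1}"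
    and sf: "smooth_fun f" and pf: "periodic1 f" and sg: "smooth_fun g" and pg: "periodic1 g"
  defines "\<alpha> \<equiv> \<lambda>k. cmod (fourier_coeff f k)" and "\<gamma> \<equiv> \<lambda>k. cmod (fourier_coeff g k)"
  defines "A \<equiv> \<lambda>k. sobolev_weight ((m + \<beta>)/2) k * \<alpha> k" and "B \<equiv> \<lambda>k. sobolev_weight ((m + \<beta>)/2) k * \<gamma> k"
  shows "sobolev_weight (m/2) n * cmod (fourier_coeff (Hop \<epsilon> s1 s2 \<beta> f g) n)
     \<le> Hop_symbol_const \<beta> * 2 powr (m + \<beta>) * (seq_conv A \<gamma> n + seq_conv B \<alpha> n)"
proof -
  define c0 where "c0 = Hop_symbol_const \<beta> * 2 powr (m + \<beta>)"
  define t where "t k = fourier_coeff f k * fourier_coeff g (n - k)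
                          * Hop_symbol \<epsilon> \<beta> (of_int k * s1 + of_int (n - k) * s2)" for k
  define R where "R k = c0 * (A k * \<gamma> (n - k) + \<alpha> k * B (n - k))" for k
  have nonneg: "\<alpha> k \<ge> 0" "\<gamma> k \<ge> 0" "A k \<ge> 0" "B k \<ge> 0" for k
    by (auto simp: \<alpha>_def \<gamma>_def A_def B_def)
  have sq: "(\<lambda>k. (A k)\<^sup>2) summable_on UNIV" "(\<lambda>k. (B k)\<^sup>2) summable_on UNIV"
    using summable_on_sobolev_weight_fourier_coeff[OF sf pf, of "m + \<beta>"]
      summable_on_sobolev_weight_fourier_coeff[OF sg pg, of "m + \<beta>"]
    by (simp_all add: A_def B_def \<alpha>_def \<gamma>_def power_mult_distrib sobolev_weight_half_sq)
  have l1: "\<alpha> summable_on UNIV" "\<gamma> summable_on UNIV"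
    unfolding \<alpha>_def \<gamma>_def by (intro summable_on_norm_fourier_coeff sf pf sg pg)+
  have R1: "(\<lambda>k. A k * \<gamma> (n - k)) summable_on UNIV"
    by (rule summable_on_seq_conv[OF _ _ sq(1) l1(2)]) (simp_all add: nonneg)
  have "(\<lambda>k. B k * \<alpha> (n - k)) summable_on UNIV"
    by (rule summable_on_seq_conv[OF _ _ sq(2) l1(1)]) (simp_all add: nonneg)
  then have R2: "(\<lambda>k. \<alpha> k * B (n - k)) summable_on UNIV"
    using summable_on_reindex_bij_betw[OF bij_betw_int_reflect[of n], of "\<lambda>k. B k * \<alpha> (n - k)"]
    by (simp add: mult.commute)
  have sR: "R summable_on UNIV"
    unfolding R_def by (intro summable_on_cmult_right summable_on_add R1 R2)
  have tR: "sobolev_weight (m/2) n * cmod (t k) \<le> R k" for k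
  proof -
    have "sobolev_weight (m/2) n * cmod (t k)
        = \<alpha> k * \<gamma> (n - k) * (sobolev_weight (m/2) n * cmod (Hop_symbol \<epsilon> \<beta> (of_int k * s1 + of_int (n - k) * s2)))"
      by (simp add: t_def norm_mult \<alpha>_def \<gamma>_def mult_ac)
    also have "\<dots> \<le> \<alpha> k * \<gamma> (n - k) * (c0 * (sobolev_weight ((m + \<beta>)/2) k + sobolev_weight ((m + \<beta>)/2) (n - k)))"
      unfolding c0_def using nonneg by (intro mult_left_mono weighted_Hop_symbol_le m b e s12) auto
    also have "\<dots> = R k"
      by (simp add: R_def A_def B_def algebra_simps)
    finally show ?thesis .
  qed
  have "cmod (complex_of_real (sobolev_weight (m/2) n) * fourier_coeff (Hop \<epsilon> s1 s2 \<beta> f g) n) \<le> (\<Sum>\<^sub>\<infinity>k. R k)"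
    by (rule norm_infsum_le[OF has_sum_cmult_right[OF fourier_coeff_Hop[OF e less_imp_le[OF b(1)] sf pf sg pg]]
          has_sum_infsum[OF sR]])
       (use tR in \<open>simp add: t_def norm_mult\<close>)
  then have "sobolev_weight (m/2) n * cmod (fourier_coeff (Hop \<epsilon> s1 s2 \<beta> f g) n) \<le> (\<Sum>\<^sub>\<infinity>k. R k)"
    by (simp add: norm_mult)
  also have "\<dots> = c0 * (seq_conv A \<gamma> n + seq_conv \<alpha> B n)"
    by (simp add: R_def seq_conv_def infsum_cmult_right' infsum_add[OF R1 R2])
  finally show ?thesis by (simp add: c0_def seq_conv_commute[of \<alpha>])
qed

lemma sum_sq_le_of_seq_conv_bound:
  fixes h \<alpha> \<gamma> A B :: "int \<Rightarrow> real"
  assumes nonneg: "\<And>k. \<alpha> k \<ge> 0" "\<And>k. \<gamma> k \<ge> 0" "\<And>k. A k \<ge> 0" "\<And>k. B k \<ge> 0"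
    and l1: "\<alpha> summable_on UNIV" "\<gamma> summable_on UNIV"
    and l2: "(\<lambda>k. (A k)\<^sup>2) summable_on UNIV" "(\<lambda>k. (B k)\<^sup>2) summable_on UNIV"
    and h: "\<And>n. \<bar>h n\<bar> \<le> c * (seq_conv A \<gamma> n + seq_conv B \<alpha> n)"
  shows "(\<Sum>\<^sub>\<infinity>n. (h n)\<^sup>2) \<le> 2 * c\<^sup>2 * ((\<Sum>\<^sub>\<infinity>k. \<gamma> k)\<^sup>2 * (\<Sum>\<^sub>\<infinity>k. (A k)\<^sup>2) + (\<Sum>\<^sub>\<infinity>k. \<alpha> k)\<^sup>2 * (\<Sum>\<^sub>\<infinity>k. (B k)\<^sup>2))"
proof -
  let ?X = "seq_conv A \<gamma>" and ?Y = "seq_conv B \<alpha>"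
  have "(h n)\<^sup>2 \<le> (c * (?X n + ?Y n))\<^sup>2" for n
    using h[of n] by (metis abs_ge_zero power2_abs power_mono)
  also have "(c * (?X n + ?Y n))\<^sup>2 \<le> 2 * c\<^sup>2 * ((?X n)\<^sup>2 + (?Y n)\<^sup>2)" for n
  proof -
    have "(?X n + ?Y n)\<^sup>2 \<le> 2 * ((?X n)\<^sup>2 + (?Y n)\<^sup>2)"
      using zero_le_power2[of "?X n - ?Y n"] by (simp add: power2_sum power2_diff)
    then have "c\<^sup>2 * (?X n + ?Y n)\<^sup>2 \<le> c\<^sup>2 * (2 * ((?X n)\<^sup>2 + (?Y n)\<^sup>2))"
      by (rule mult_left_mono) simp
    then show ?thesis by (simp only: power_mult_distrib mult.left_commute mult.assoc)
  qed
  finally have bound: "(h n)\<^sup>2 \<le> 2 * c\<^sup>2 * ((?X n)\<^sup>2 + (?Y n)\<^sup>2)" for n .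
  have sXY: "(\<lambda>n. 2 * c\<^sup>2 * ((?X n)\<^sup>2 + (?Y n)\<^sup>2)) summable_on UNIV"
    using nonneg l1 l2
    by (intro summable_on_cmult_right summable_on_add summable_on_seq_conv_sq) auto
  have "(\<Sum>\<^sub>\<infinity>n. (h n)\<^sup>2) \<le> (\<Sum>\<^sub>\<infinity>n. 2 * c\<^sup>2 * ((?X n)\<^sup>2 + (?Y n)\<^sup>2))"
    by (rule infsum_mono[OF summable_on_comparison_test[OF sXY bound] sXY bound]) auto
  also have "\<dots> = 2 * c\<^sup>2 * ((\<Sum>\<^sub>\<infinity>n. (?X n)\<^sup>2) + (\<Sum>\<^sub>\<infinity>n. (?Y n)\<^sup>2))"
    using nonneg l1 l2
    by (simp add: infsum_cmult_right' infsum_add summable_on_seq_conv_sq)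
  also have "\<dots> \<le> 2 * c\<^sup>2 * ((\<Sum>\<^sub>\<infinity>k. \<gamma> k)\<^sup>2 * (\<Sum>\<^sub>\<infinity>k. (A k)\<^sup>2) + (\<Sum>\<^sub>\<infinity>k. \<alpha> k)\<^sup>2 * (\<Sum>\<^sub>\<infinity>k. (B k)\<^sup>2))"
    using nonneg l1 l2 by (intro mult_left_mono add_mono Young_seq_conv) auto
  finally show ?thesis .
qed

lemma sobolev_norm_eq_weighted_l2:
  "sobolev_norm s f = sqrt (\<Sum>\<^sub>\<infinity>k. (sobolev_weight (s/2) k * cmod (fourier_coeff f k))\<^sup>2)"
  by (simp add: sobolev_norm_def power_mult_distrib sobolev_weight_half_sq) (simp add: sobolev_weight_def)

lemma sobolev_norm_nonneg [simp]: "sobolev_norm s f \<ge> 0"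
  by (simp add: sobolev_norm_def infsum_nonneg)

lemma sq_l1_fourier_coeff_le_sobolev_norm:
  assumes s: "s > 1/2" and sf: "smooth_fun f" and pf: "periodic1 f"
  shows "(\<Sum>\<^sub>\<infinity>k. cmod (fourier_coeff f k))\<^sup>2 \<le> (\<Sum>\<^sub>\<infinity>k. sobolev_weight (- s) k) * (sobolev_norm s f)\<^sup>2"
proof -
  have "(\<Sum>\<^sub>\<infinity>k. cmod (fourier_coeff f k)) \<le> sqrt (\<Sum>\<^sub>\<infinity>k. sobolev_weight (- s) k) * sobolev_norm s f"
    using summable_on_weighted_l2_imp_l1(2)[OF s summable_on_sobolev_weight_fourier_coeff[OF sf pf]]
    by (simp add: sobolev_norm_def sobolev_weight_def)
  then have "(\<Sum>\<^sub>\<infinity>k. cmod (fourier_coeff f k))\<^sup>2 \<le> (sqrt (\<Sum>\<^sub>\<infinity>k. sobolev_weight (- s) k) * sobolev_norm s f)\<^sup>2"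
    by (intro power_mono) (auto intro: infsum_nonneg)
  also have "\<dots> = (\<Sum>\<^sub>\<infinity>k. sobolev_weight (- s) k) * (sobolev_norm s f)\<^sup>2"
    by (simp add: power_mult_distrib infsum_nonneg)
  finally show ?thesis .
qed

lemma sobolev_norm_Hop_le:
  assumes m: "m \<ge> 0" "m + \<beta> > 1/2" and b: "0 < \<beta>" "\<beta> < 1" and e: "0 < \<epsilon>" "\<epsilon> \<le> 1/2"
    and s12: "s1 \<in> {0..1}" "s2 \<in> {0..1}"
    and sf: "smooth_fun f" and pf: "periodic1 f" and sg: "smooth_fun g" and pg: "periodic1 g"
  shows "sobolev_norm m (Hop \<epsilon> s1 s2 \<beta> f g)
     \<le> 2 * Hop_symbol_const \<beta> * 2 powr (m + \<beta>) * sqrt (\<Sum>\<^sub>\<infinity>k. sobolev_weight (- (m + \<beta>)) k)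
         * sobolev_norm (m + \<beta>) f * sobolev_norm (m + \<beta>) g"
proof -
  define c where "c = Hop_symbol_const \<beta> * 2 powr (m + \<beta>)"
  define Z where "Z = (\<Sum>\<^sub>\<infinity>k. sobolev_weight (- (m + \<beta>)) k)"
  have Z0: "Z \<ge> 0" unfolding Z_def by (rule infsum_nonneg) simp
  define \<alpha> where "\<alpha> = (\<lambda>k. cmod (fourier_coeff f k))"
  define \<gamma> where "\<gamma> = (\<lambda>k. cmod (fourier_coeff g k))"
  define A where "A = (\<lambda>k. sobolev_weight ((m + \<beta>)/2) k * \<alpha> k)"
  define B where "B = (\<lambda>k. sobolev_weight ((m + \<beta>)/2) k * \<gamma> k)"
  have l2: "(\<Sum>\<^sub>\<infinity>k. (A k)\<^sup>2) = (sobolev_norm (m + \<beta>) f)\<^sup>2" "(\<Sum>\<^sub>\<infinity>k. (B k)\<^sup>2) = (sobolev_norm (m + \<beta>) g)\<^sup>2"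
    by (simp_all add: sobolev_norm_eq_weighted_l2 A_def B_def \<alpha>_def \<gamma>_def infsum_nonneg)
  have "(sobolev_norm m (Hop \<epsilon> s1 s2 \<beta> f g))\<^sup>2
      = (\<Sum>\<^sub>\<infinity>n. (sobolev_weight (m/2) n * cmod (fourier_coeff (Hop \<epsilon> s1 s2 \<beta> f g) n))\<^sup>2)"
    by (simp add: sobolev_norm_eq_weighted_l2 infsum_nonneg)
  also have "\<dots> \<le> 2 * c\<^sup>2 * ((\<Sum>\<^sub>\<infinity>k. \<gamma> k)\<^sup>2 * (\<Sum>\<^sub>\<infinity>k. (A k)\<^sup>2) + (\<Sum>\<^sub>\<infinity>k. \<alpha> k)\<^sup>2 * (\<Sum>\<^sub>\<infinity>k. (B k)\<^sup>2))"
  proof (rule sum_sq_le_of_seq_conv_bound)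
    show "(\<lambda>k. (A k)\<^sup>2) summable_on UNIV" "(\<lambda>k. (B k)\<^sup>2) summable_on UNIV"
      using summable_on_sobolev_weight_fourier_coeff[OF sf pf, of "m + \<beta>"]
        summable_on_sobolev_weight_fourier_coeff[OF sg pg, of "m + \<beta>"]
      by (simp_all add: A_def B_def \<alpha>_def \<gamma>_def power_mult_distrib sobolev_weight_half_sq)
    show "\<bar>sobolev_weight (m/2) n * cmod (fourier_coeff (Hop \<epsilon> s1 s2 \<beta> f g) n)\<bar>
        \<le> c * (seq_conv A \<gamma> n + seq_conv B \<alpha> n)" for n
      using weighted_fourier_coeff_Hop_le[OF m(1) b e s12 sf pf sg pg, of n]
      by (simp add: c_def A_def B_def \<alpha>_def \<gamma>_def fun_eq_iff)
  qed (use sf pf sg pg in \<open>auto simp: A_def B_def \<alpha>_def \<gamma>_def intro: summable_on_norm_fourier_coeff\<close>)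
  also have "\<dots> \<le> 2 * c\<^sup>2 * ((Z * (sobolev_norm (m + \<beta>) g)\<^sup>2) * (sobolev_norm (m + \<beta>) f)\<^sup>2
                              + (Z * (sobolev_norm (m + \<beta>) f)\<^sup>2) * (sobolev_norm (m + \<beta>) g)\<^sup>2)"
    unfolding l2 Z_def \<alpha>_def \<gamma>_def using m
    by (intro mult_left_mono add_mono mult_right_mono sq_l1_fourier_coeff_le_sobolev_norm sf pf sg pg)
       (auto simp del: power_mult_distrib)
  also have "\<dots> = (2 * c * sqrt Z * sobolev_norm (m + \<beta>) f * sobolev_norm (m + \<beta>) g)\<^sup>2"
    using Z0 by (simp add: power_mult_distrib)
  finally have "(sobolev_norm m (Hop \<epsilon> s1 s2 \<beta> f g))\<^sup>2
      \<le> (2 * c * sqrt Z * sobolev_norm (m + \<beta>) f * sobolev_norm (m + \<beta>) g)\<^sup>2" .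
  moreover have "0 \<le> 2 * c * sqrt Z * sobolev_norm (m + \<beta>) f * sobolev_norm (m + \<beta>) g"
    using Z0 Hop_symbol_const_nonneg[OF b] by (simp add: c_def)
  ultimately have "sobolev_norm m (Hop \<epsilon> s1 s2 \<beta> f g)
      \<le> 2 * c * sqrt Z * sobolev_norm (m + \<beta>) f * sobolev_norm (m + \<beta>) g"
    by (rule power2_le_imp_le)
  then show ?thesis by (simp add: c_def Z_def mult.assoc)
qed

theorem theorem5p3:
  fixes m \<beta> :: real
  assumes "m > 1/2" and "0 < \<beta>" and "\<beta> < 1"
  shows "\<exists>C::real. \<forall>\<epsilon> s1 s2 (f::real \<Rightarrow> real) (g::real \<Rightarrow> real).
           0 < \<epsilon> \<and> \<epsilon> \<le> 1/2 \<and> s1 \<in> {0..1} \<and> s2 \<in> {0..1} \<and>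
           periodic1 f \<and> smooth_fun f \<and> periodic1 g \<and> smooth_fun g \<longrightarrow>
           sobolev_norm m (Hop \<epsilon> s1 s2 \<beta> f g)
             \<le> C * sobolev_norm (m + \<beta>) f * sobolev_norm (m + \<beta>) g"
proof -
  let ?C = "2 * Hop_symbol_const \<beta> * 2 powr (m + \<beta>) * sqrt (\<Sum>\<^sub>\<infinity>k. sobolev_weight (- (m + \<beta>)) k)"
  show ?thesis
    using sobolev_norm_Hop_le[of m \<beta>] assms by (intro exI[of _ ?C]) auto
qed

end
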